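(* Let $G$ be a finitely generated nilpotent group with lower central series $G=G_1\ge G_2\ge\cdots\ge G_{k+1}=\{1\}$, and let $\phi\in\operatorname{Aut}(G)$. For each $i$, let $B_i=G_i/G_{i+1}$, let $\theta_i$ be the automorphism of $B_i$ induced by $\phi$, let $\bar\theta_i$ be the automorphism induced by $\theta_i$ on $B_i/\mathrm{Tor}(B_i)\cong\mathbb{Z}^{m_i}$, and let $M_i\in\mathrm{GL}(m_i,\mathbb{Z})$ be the matrix of $\bar\theta_i$ with respect to a fixed basis. If all eigenvalues of $M_1$ have absolute value $1$, then for every $i$ all eigenvalues of $M_i$ have absolute value $1$.
   Context: $G_{i+1}=[G_i,G]$; each $G_i$ is characteristic so $\phi$ restricts to $G_i$ and induces automorphisms of the quotients. $\mathrm{Tor}(B)$ denotes the torsion subgroup of the finitely generated abelian group $B$. *)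

theory Defs
  imports "HOL-Algebra.Coset" "HOL-Algebra.Generated_Groups" "Jordan_Normal_Form.Char_Poly"
begin

(* Lower central series, 0-based: lcs G 0 = G (the paper's G_1),
   lcs G (Suc n) = [lcs G n, G]  (so lcs G n is the paper's G_{n+1}). *)
primrec lcs :: "('a, 'b) monoid_scheme \<Rightarrow> nat \<Rightarrow> 'a set" where
  "lcs G 0 = carrier G"
| "lcs G (Suc n) = generate G
     {x \<otimes>\<^bsub>G\<^esub> y \<otimes>\<^bsub>G\<^esub> inv\<^bsub>G\<^esub> x \<otimes>\<^bsub>G\<^esub> inv\<^bsub>G\<^esub> y | x y. x \<in> lcs G n \<and> y \<in> carrier G}"

definition nilpotent_group :: "('a, 'b) monoid_scheme \<Rightarrow> bool" where
  "nilpotent_group G \<longleftrightarrow> group G \<and> (\<exists>k. lcs G k = {\<one>\<^bsub>G\<^esub>})"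

definition finitely_generated :: "('a, 'b) monoid_scheme \<Rightarrow> bool" where
  "finitely_generated G \<longleftrightarrow> (\<exists>S. finite S \<and> S \<subseteq> carrier G \<and> generate G S = carrier G)"

definition tor :: "('a, 'b) monoid_scheme \<Rightarrow> 'a set" where
  "tor H = {x \<in> carrier H. \<exists>k::nat. k > 0 \<and> x [^]\<^bsub>H\<^esub> k = \<one>\<^bsub>H\<^esub>}"

definition lcs_factor :: "('a, 'b) monoid_scheme \<Rightarrow> nat \<Rightarrow> 'a set monoid" where
  "lcs_factor G n = subgroup_generated G (lcs G n) Mod lcs G (Suc n)"

definition lcs_free_factor :: "('a, 'b) monoid_scheme \<Rightarrow> nat \<Rightarrow> 'a set set monoid" where
  "lcs_free_factor G n = lcs_factor G n Mod tor (lcs_factor G n)"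

definition induced_free_aut :: "('a \<Rightarrow> 'a) \<Rightarrow> 'a set set \<Rightarrow> 'a set set" where
  "induced_free_aut \<phi> D = (\<lambda>C. \<phi> ` C) ` D"

definition zcomb :: "('c, 'd) monoid_scheme \<Rightarrow> (nat \<Rightarrow> 'c) \<Rightarrow> (nat \<Rightarrow> int) \<Rightarrow> nat \<Rightarrow> 'c" where
  "zcomb F b a m = foldr (\<lambda>j acc. (b j [^]\<^bsub>F\<^esub> a j) \<otimes>\<^bsub>F\<^esub> acc) [0..<m] \<one>\<^bsub>F\<^esub>"

definition is_zbasis :: "('c, 'd) monoid_scheme \<Rightarrow> nat \<Rightarrow> (nat \<Rightarrow> 'c) \<Rightarrow> bool" where
  "is_zbasis F m b \<longleftrightarrow> (\<forall>j<m. b j \<in> carrier F) \<and>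
     (\<forall>x \<in> carrier F. \<exists>!a. (\<forall>j\<ge>m. a j = 0) \<and> x = zcomb F b a m)"

definition zcoords :: "('c, 'd) monoid_scheme \<Rightarrow> nat \<Rightarrow> (nat \<Rightarrow> 'c) \<Rightarrow> 'c \<Rightarrow> nat \<Rightarrow> int" where
  "zcoords F m b x = (THE a. (\<forall>j\<ge>m. a j = 0) \<and> x = zcomb F b a m)"

(* matrix of an endomorphism f of F w.r.t. the basis b (column j = coordinates of f(b_j)) *)
definition basis_matrix :: "('c, 'd) monoid_scheme \<Rightarrow> nat \<Rightarrow> (nat \<Rightarrow> 'c) \<Rightarrow> ('c \<Rightarrow> 'c) \<Rightarrow> int mat" where
  "basis_matrix F m b f = mat m m (\<lambda>(k, j). zcoords F m b (f (b j)) k)"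

definition lcs_matrix :: "('a, 'b) monoid_scheme \<Rightarrow> ('a \<Rightarrow> 'a) \<Rightarrow> nat \<Rightarrow> nat \<Rightarrow> (nat \<Rightarrow> 'a set set) \<Rightarrow> int mat" where
  "lcs_matrix G \<phi> n m b = basis_matrix (lcs_free_factor G n) m b (induced_free_aut \<phi>)"

end

(* Polynomial growth of orbits is what passes between the layers of the lower central series.
   For an integer matrix M the entries of M^k are bounded by a polynomial in k iff every
   eigenvalue of M has modulus at most 1 (Jordan normal form in one direction, an eigenvector
   in the other).  On a free abelian group with a basis this says that the orbit of every element
   under theta stays among the integer combinations of a fixed finite set with coefficients of
   polynomial size.  Commutation induces an equivariant bilinear map
   B_i/Tor x B_1/Tor -> B_(i+1)/Tor whose image generates, and a bilinear map multiplies such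
   polynomial bounds, so polynomial orbits spread from the first layer to all layers: every
   eigenvalue of every M_i has modulus at most 1.  The same argument for the inverse of phi,
   whose matrices are the inverses of the M_i, gives modulus at least 1. *)

theory Submission
  imports Defs "Jordan_Normal_Form.Spectral_Radius" "HOL-Real_Asymp.Real_Asymp"
begin

section \<open>Commutators and the lower central series\<close>

definition commutator :: "('a, 'b) monoid_scheme \<Rightarrow> 'a \<Rightarrow> 'a \<Rightarrow> 'a" where
  "commutator G x y = x \<otimes>\<^bsub>G\<^esub> y \<otimes>\<^bsub>G\<^esub> inv\<^bsub>G\<^esub> x \<otimes>\<^bsub>G\<^esub> inv\<^bsub>G\<^esub> y"

lemma lcs_Suc_commutators:
  "lcs G (Suc n) = generate G {commutator G x y | x y. x \<in> lcs G n \<and> y \<in> carrier G}"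
  by (simp add: commutator_def)

declare lcs.simps(2) [simp del]

lemma (in comm_group) commutator_eq_one:
  assumes "x \<in> carrier G" "y \<in> carrier G"
  shows "commutator G x y = \<one>"
proof -
  have "commutator G x y = (x \<otimes> y) \<otimes> inv (x \<otimes> y)"
    using assms by (simp add: commutator_def inv_mult m_assoc)
  then show ?thesis using assms by simp
qed

context group
begin

lemma inv_mult_cancel_left [simp]: "x \<in> carrier G \<Longrightarrow> y \<in> carrier G \<Longrightarrow> inv x \<otimes> (x \<otimes> y) = y"
  by (simp flip: m_assoc)

lemma mult_inv_cancel_left [simp]: "x \<in> carrier G \<Longrightarrow> y \<in> carrier G \<Longrightarrow> x \<otimes> (inv x \<otimes> y) = y"
  by (simp flip: m_assoc)

lemma commutator_closed [simp]:
  "x \<in> carrier G \<Longrightarrow> y \<in> carrier G \<Longrightarrow> commutator G x y \<in> carrier G"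
  by (simp add: commutator_def)

lemma commutator_conj:
  "g \<in> carrier G \<Longrightarrow> x \<in> carrier G \<Longrightarrow> y \<in> carrier G \<Longrightarrow>
   g \<otimes> commutator G x y \<otimes> inv g = commutator G (g \<otimes> x \<otimes> inv g) (g \<otimes> y \<otimes> inv g)"
  by (simp add: commutator_def m_assoc inv_mult_group)

lemma hom_commutator:
  "h \<in> hom G G \<Longrightarrow> x \<in> carrier G \<Longrightarrow> y \<in> carrier G \<Longrightarrow>
   h (commutator G x y) = commutator G (h x) (h y)"
  using group_hom.hom_inv[of G G h]
  by (simp add: commutator_def hom_mult group_hom_def group_hom_axioms_def is_group)

lemma lcs_subgroup: "subgroup (lcs G n) G"
proof (induction n)
  case 0
  then show ?case by (simp add: subgroup_self)
next
  case (Suc n)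
  then have "{commutator G x y | x y. x \<in> lcs G n \<and> y \<in> carrier G} \<subseteq> carrier G"
    using subgroup.subset by fastforce
  then show ?case unfolding lcs_Suc_commutators by (rule generate_is_subgroup)
qed

lemma lcs_carrier: "x \<in> lcs G n \<Longrightarrow> x \<in> carrier G"
  using subgroup.subset[OF lcs_subgroup] by blast

lemma commutator_in_lcs_Suc:
  "x \<in> lcs G n \<Longrightarrow> y \<in> carrier G \<Longrightarrow> commutator G x y \<in> lcs G (Suc n)"
  unfolding lcs_Suc_commutators by (rule generate.incl) auto

lemma lcs_normal: "lcs G n \<lhd> G"
proof (induction n)
  case 0
  then show ?case by (simp add: normal_self)
next
  case (Suc n)
  show ?case unfolding lcs_Suc_commutators
  proof (rule normal_generateI)
    show "{commutator G x y | x y. x \<in> lcs G n \<and> y \<in> carrier G} \<subseteq> carrier G"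
      using lcs_carrier by auto
    fix c g
    assume "c \<in> {commutator G x y | x y. x \<in> lcs G n \<and> y \<in> carrier G}" and g: "g \<in> carrier G"
    then obtain x y where xy: "c = commutator G x y" "x \<in> lcs G n" "y \<in> carrier G" by auto
    have "g \<otimes> x \<otimes> inv g \<in> lcs G n"
      using Suc xy g by (simp add: normal.inv_op_closed2)
    then show "g \<otimes> c \<otimes> inv g \<in> {commutator G x y | x y. x \<in> lcs G n \<and> y \<in> carrier G}"
      using xy g lcs_carrier by (auto simp: commutator_conj)
  qed
qed

lemma lcs_Suc_subset: "lcs G (Suc n) \<subseteq> lcs G n"
proof -
  have "commutator G x y \<in> lcs G n" if x: "x \<in> lcs G n" and y: "y \<in> carrier G" for x y
  proof -
    have "y \<otimes> inv x \<otimes> inv y \<in> lcs G n"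
      using x y lcs_normal lcs_subgroup by (simp add: normal.inv_op_closed2 subgroup.m_inv_closed)
    then have "x \<otimes> (y \<otimes> inv x \<otimes> inv y) \<in> lcs G n"
      using x by (simp add: subgroup.m_closed[OF lcs_subgroup])
    then show ?thesis
      using x y lcs_carrier by (auto simp: commutator_def m_assoc)
  qed
  then show ?thesis
    unfolding lcs_Suc_commutators by (intro generate_subgroup_incl[OF _ lcs_subgroup]) blast
qed

lemma iso_image_lcs:
  assumes \<phi>: "\<phi> \<in> iso G G"
  shows "\<phi> ` lcs G n = lcs G n"
proof (induction n)
  case 0
  then show ?case using \<phi> by (simp add: iso_def bij_betw_def)
next
  case (Suc n)
  interpret group_hom G G \<phi>
    using \<phi> by (simp add: group_hom_def group_hom_axioms_def iso_def is_group)
  let ?S = "\<lambda>A. {commutator G x y | x y. x \<in> A \<and> y \<in> carrier G}"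
  have "\<phi> ` ?S (lcs G n) = {commutator G x y | x y. x \<in> \<phi> ` lcs G n \<and> y \<in> \<phi> ` carrier G}"
    using lcs_carrier homh by (force simp: hom_commutator)
  also have "\<dots> = ?S (lcs G n)"
    using Suc \<phi> by (simp add: iso_def bij_betw_def)
  finally show ?case
    unfolding lcs_Suc_commutators using lcs_carrier by (subst generate_img[symmetric]) auto
qed

lemma hom_to_comm_group_trivial_on_lcs_1:
  assumes H: "comm_group H" and f: "f \<in> hom G H" and x: "x \<in> lcs G 1"
  shows "f x = \<one>\<^bsub>H\<^esub>"
proof -
  interpret H: comm_group H by (rule H)
  interpret group_hom G H f
    using f by (simp add: group_hom_def group_hom_axioms_def is_group H.is_group)
  have "{commutator G x y | x y. x \<in> lcs G 0 \<and> y \<in> carrier G} \<subseteq> kernel G H f"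
    by (auto simp: kernel_def commutator_def H.commutator_eq_one[unfolded commutator_def])
  then have "lcs G 1 \<subseteq> kernel G H f"
    unfolding One_nat_def lcs_Suc_commutators by (rule generate_subgroup_incl[OF _ subgroup_kernel])
  then show ?thesis using x by (auto simp: kernel_def)
qed

end

section \<open>Abelian quotients modulo torsion\<close>

lemma (in comm_group) tor_subgroup: "subgroup (tor G) G"
proof (rule subgroupI)
  show "tor G \<subseteq> carrier G" by (auto simp: tor_def)
  show "tor G \<noteq> {}" by (auto simp: tor_def intro!: exI[of _ "\<one>"] exI[of _ "1::nat"])
next
  fix a assume "a \<in> tor G"
  then obtain k :: nat where "a \<in> carrier G" "k > 0" "a [^] k = \<one>" unfolding tor_def by blast
  then show "inv a \<in> tor G" by (auto simp: tor_def nat_pow_inv intro!: exI[of _ k])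
next
  fix a b assume "a \<in> tor G" "b \<in> tor G"
  then obtain k l :: nat where a: "a \<in> carrier G" "k > 0" "a [^] k = \<one>"
    and b: "b \<in> carrier G" "l > 0" "b [^] l = \<one>" unfolding tor_def by blast
  have "a [^] (k * l) = \<one>" using a by (metis nat_pow_pow nat_pow_one)
  moreover have "b [^] (k * l) = \<one>" using b by (metis nat_pow_pow nat_pow_one mult.commute)
  ultimately have "(a \<otimes> b) [^] (k * l) = \<one>" using a b by (simp add: nat_pow_distrib)
  then show "a \<otimes> b \<in> tor G" using a b by (auto simp: tor_def intro!: exI[of _ "k * l"])
qed

definition isolator :: "('a, 'b) monoid_scheme \<Rightarrow> 'a set \<Rightarrow> 'a set" where
  "isolator K N = {y \<in> carrier K. \<exists>e::nat. e > 0 \<and> y [^]\<^bsub>K\<^esub> e \<in> N}"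

lemma hom_image_r_coset:
  assumes h: "h \<in> hom G H" and N: "N \<subseteq> carrier G" and z: "z \<in> carrier G"
  shows "h ` (N #>\<^bsub>G\<^esub> z) = h ` N #>\<^bsub>H\<^esub> h z"
  using h z subsetD[OF N] by (force simp: r_coset_def hom_mult)

locale abelian_quotient = normal N K for N and K (structure) +
  assumes commutator_mem: "x \<in> carrier K \<Longrightarrow> y \<in> carrier K \<Longrightarrow> commutator K x y \<in> N"
begin

abbreviation "ab_factor \<equiv> K Mod N"
abbreviation "free_factor \<equiv> ab_factor Mod tor ab_factor"

definition free_proj :: "'a \<Rightarrow> 'a set set" where
  "free_proj x = tor ab_factor #>\<^bsub>ab_factor\<^esub> (N #> x)"

lemma rcos_eq_of_mult_inv_mem:
  assumes "x \<in> carrier K" "y \<in> carrier K" "x \<otimes> inv y \<in> N"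
  shows "N #> x = N #> y"
proof -
  have "x = (x \<otimes> inv y) \<otimes> y" using assms by (simp add: m_assoc)
  then have "x \<in> N #> y" using assms rcosI[of "x \<otimes> inv y" N y] subset by auto
  then show ?thesis using repr_independence[of x N y] assms subgroup_axioms by auto
qed

lemma rcos_eq_self_iff: "x \<in> carrier K \<Longrightarrow> N #> x = N \<longleftrightarrow> x \<in> N"
  by (metis rcos_const is_group rcos_self subgroup_axioms)

lemma ab_factor_comm_group: "comm_group ab_factor"
proof (rule group.group_comm_groupI[OF factorgroup_is_group])
  fix X Y assume "X \<in> carrier ab_factor" "Y \<in> carrier ab_factor"
  then obtain x y where xy: "x \<in> carrier K" "y \<in> carrier K" "X = N #> x" "Y = N #> y"
    by (auto simp: carrier_FactGroup)
  have "x \<otimes> y \<otimes> inv (y \<otimes> x) = commutator K x y"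
    using xy by (simp add: commutator_def inv_mult_group m_assoc)
  then have "N #> (x \<otimes> y) = N #> (y \<otimes> x)"
    using xy commutator_mem by (intro rcos_eq_of_mult_inv_mem) auto
  then show "X \<otimes>\<^bsub>ab_factor\<^esub> Y = Y \<otimes>\<^bsub>ab_factor\<^esub> X" using xy by (simp add: rcos_sum)
qed

lemma tor_ab_factor_subgroup: "subgroup (tor ab_factor) ab_factor"
  by (rule comm_group.tor_subgroup[OF ab_factor_comm_group])

lemma free_factor_comm_group: "comm_group free_factor"
  by (rule comm_group.abelian_FactGroup[OF ab_factor_comm_group tor_ab_factor_subgroup])

lemma free_proj_hom: "free_proj \<in> hom K free_factor"
proof -
  have "tor ab_factor \<lhd> ab_factor"
    using comm_group.normal_iff_subgroup[OF ab_factor_comm_group] tor_ab_factor_subgroup by auto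
  then have "(\<lambda>a. tor ab_factor #>\<^bsub>ab_factor\<^esub> a) \<in> hom ab_factor free_factor"
    by (rule normal.r_coset_hom_Mod)
  then have "(\<lambda>a. tor ab_factor #>\<^bsub>ab_factor\<^esub> a) \<circ> (\<lambda>a. N #> a) \<in> hom K free_factor"
    using r_coset_hom_Mod by (rule Group.hom_compose[rotated])
  then show ?thesis by (simp add: free_proj_def[abs_def] o_def)
qed

lemma free_proj_surj: "carrier free_factor = free_proj ` carrier K"
  by (auto simp: carrier_FactGroup free_proj_def)

lemma tor_ab_factor_eq: "tor ab_factor = (\<lambda>y. N #> y) ` isolator K N"
proof safe
  fix C assume "C \<in> tor ab_factor"
  then obtain e :: nat where C: "C \<in> carrier ab_factor" "e > 0" "C [^]\<^bsub>ab_factor\<^esub> e = N"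
    by (auto simp: tor_def)
  then obtain y where y: "y \<in> carrier K" "C = N #> y" by (auto simp: carrier_FactGroup)
  then have "y [^] e \<in> N" using C rcos_eq_self_iff[of "y [^] e"] by (simp add: FactGroup_pow)
  then show "C \<in> (\<lambda>y. N #> y) ` isolator K N" using y C by (auto simp: isolator_def)
next
  fix y assume "y \<in> isolator K N"
  then obtain e :: nat where y: "y \<in> carrier K" "e > 0" "y [^] e \<in> N" by (auto simp: isolator_def)
  then have "(N #> y) [^]\<^bsub>ab_factor\<^esub> e = \<one>\<^bsub>ab_factor\<^esub>"
    using rcos_eq_self_iff[of "y [^] e"] by (simp add: FactGroup_pow)
  moreover have "N #> y \<in> carrier ab_factor" using y by (auto simp: carrier_FactGroup)
  ultimately show "N #> y \<in> tor ab_factor" using y by (auto simp: tor_def)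
qed

lemma free_proj_eq:
  assumes x: "x \<in> carrier K"
  shows "free_proj x = (\<lambda>y. N #> (y \<otimes> x)) ` isolator K N"
proof -
  have "N #> (y \<otimes> x) = (N #> y) <#> (N #> x)" if "y \<in> isolator K N" for y
    using that x by (simp add: rcos_sum isolator_def)
  then show ?thesis
    unfolding free_proj_def r_coset_def tor_ab_factor_eq by auto
qed

lemma free_proj_eq_one_iff:
  assumes x: "x \<in> carrier K"
  shows "free_proj x = \<one>\<^bsub>free_factor\<^esub> \<longleftrightarrow> x \<in> isolator K N"
proof -
  have c: "N #> x \<in> carrier ab_factor" using x by (auto simp: carrier_FactGroup)
  have "free_proj x = \<one>\<^bsub>free_factor\<^esub> \<longleftrightarrow> N #> x \<in> tor ab_factor"
    unfolding free_proj_def one_FactGroup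
    by (metis c tor_ab_factor_subgroup factorgroup_is_group group.rcos_self subgroup.rcos_const)
  also have "\<dots> \<longleftrightarrow> (\<exists>e::nat. e > 0 \<and> N #> (x [^] e) = N)"
    using c x by (auto simp: tor_def FactGroup_pow)
  also have "\<dots> \<longleftrightarrow> x \<in> isolator K N"
    using x rcos_eq_self_iff by (auto simp: isolator_def)
  finally show ?thesis .
qed

lemma free_factor_torsion_free:
  assumes D: "D \<in> carrier free_factor" and e: "e > 0" and De: "D [^]\<^bsub>free_factor\<^esub> (e::nat) = \<one>\<^bsub>free_factor\<^esub>"
  shows "D = \<one>\<^bsub>free_factor\<^esub>"
proof -
  obtain x where x: "x \<in> carrier K" "D = free_proj x" using D free_proj_surj by auto
  have "free_proj (x [^] e) = \<one>\<^bsub>free_factor\<^esub>"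
    using x De hom_nat_pow[OF free_proj_hom x(1) is_group comm_group.axioms(2)[OF free_factor_comm_group]]
    by simp
  then obtain f :: nat where "f > 0" "(x [^] e) [^] f \<in> N"
    using free_proj_eq_one_iff x by (auto simp: isolator_def)
  then have "x \<in> isolator K N"
    using x e by (auto simp: isolator_def nat_pow_pow intro!: exI[of _ "e * f"])
  then show ?thesis using x free_proj_eq_one_iff by simp
qed

lemma iso_image_isolator:
  assumes \<phi>: "\<phi> \<in> iso K K" and N: "\<phi> ` N = N"
  shows "\<phi> ` isolator K N = isolator K N"
proof -
  have hom: "\<phi> \<in> hom K K" and inj: "inj_on \<phi> (carrier K)" and surj: "\<phi> ` carrier K = carrier K"
    using \<phi> by (auto simp: iso_def bij_betw_def)
  have isolator_sub: "isolator K N \<subseteq> carrier K" by (auto simp: isolator_def)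
  have mem_iff: "\<phi> y \<in> isolator K N \<longleftrightarrow> y \<in> isolator K N" if y: "y \<in> carrier K" for y
  proof -
    have "\<phi> (y [^] e) \<in> N \<longleftrightarrow> y [^] e \<in> N" for e :: nat
      using inj_on_image_mem_iff[OF inj _ subset, of "y [^] e"] y N by simp
    moreover have "\<phi> (y [^] e) = \<phi> y [^] e" for e :: nat
      by (rule hom_nat_pow[OF hom y is_group is_group])
    ultimately show ?thesis using y hom by (simp add: isolator_def hom_in_carrier)
  qed
  show ?thesis
  proof
    show "\<phi> ` isolator K N \<subseteq> isolator K N" using mem_iff isolator_sub by blast
    show "isolator K N \<subseteq> \<phi> ` isolator K N"
    proof
      fix z assume z: "z \<in> isolator K N"
      then obtain y where "y \<in> carrier K" "z = \<phi> y" using isolator_sub surj by blast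
      then show "z \<in> \<phi> ` isolator K N" using mem_iff z by blast
    qed
  qed
qed

lemma induced_free_aut_free_proj:
  assumes \<phi>: "\<phi> \<in> iso K K" and N: "\<phi> ` N = N" and x: "x \<in> carrier K"
  shows "induced_free_aut \<phi> (free_proj x) = free_proj (\<phi> x)"
proof -
  have hom: "\<phi> \<in> hom K K" using \<phi> by (simp add: iso_def)
  have "induced_free_aut \<phi> (free_proj x) = (\<lambda>y. \<phi> ` (N #> (y \<otimes> x))) ` isolator K N"
    by (simp add: induced_free_aut_def free_proj_eq[OF x] image_image)
  also have "\<dots> = (\<lambda>y. N #> (\<phi> y \<otimes> \<phi> x)) ` isolator K N"
  proof (rule image_cong[OF refl])
    fix y assume "y \<in> isolator K N"
    then have y: "y \<in> carrier K" by (simp add: isolator_def)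
    then show "\<phi> ` (N #> (y \<otimes> x)) = N #> (\<phi> y \<otimes> \<phi> x)"
      using hom_image_r_coset[OF hom subset, of "y \<otimes> x"] N x hom by (simp add: hom_mult)
  qed
  also have "\<dots> = (\<lambda>z. N #> (z \<otimes> \<phi> x)) ` (\<phi> ` isolator K N)" by (simp add: image_image)
  also have "\<dots> = free_proj (\<phi> x)"
    using free_proj_eq hom x iso_image_isolator[OF \<phi> N] by (simp add: hom_in_carrier)
  finally show ?thesis .
qed

end

lemma group_hom_eq_if_kernel_subset:
  assumes g: "group_hom K H g" and f: "group_hom K L f"
    and ker: "\<And>z. z \<in> carrier K \<Longrightarrow> g z = \<one>\<^bsub>H\<^esub> \<Longrightarrow> f z = \<one>\<^bsub>L\<^esub>"
    and x: "x \<in> carrier K" and y: "y \<in> carrier K" and gxy: "g x = g y"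
  shows "f x = f y"
proof -
  interpret Gh: group_hom K H g by (rule g)
  interpret Fh: group_hom K L f by (rule f)
  have "g (x \<otimes>\<^bsub>K\<^esub> inv\<^bsub>K\<^esub> y) = \<one>\<^bsub>H\<^esub>" using x y gxy by simp
  then have "f (x \<otimes>\<^bsub>K\<^esub> inv\<^bsub>K\<^esub> y) = \<one>\<^bsub>L\<^esub>" using x y by (intro ker) auto
  then have "f (x \<otimes>\<^bsub>K\<^esub> inv\<^bsub>K\<^esub> y \<otimes>\<^bsub>K\<^esub> y) = f y" using x y by simp
  then show ?thesis using x y by (simp add: Gh.G.m_assoc)
qed

definition lcs_proj :: "('a, 'b) monoid_scheme \<Rightarrow> nat \<Rightarrow> 'a \<Rightarrow> 'a set set" where
  "lcs_proj G i = abelian_quotient.free_proj (lcs G (Suc i)) (subgroup_generated G (lcs G i))"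

context group
begin

lemma carrier_subgroup_generated_lcs [simp]: "carrier (subgroup_generated G (lcs G i)) = lcs G i"
  by (rule subgroup.carrier_subgroup_generated_subgroup[OF lcs_subgroup])

lemma lcs_abelian_quotient: "abelian_quotient (lcs G (Suc i)) (subgroup_generated G (lcs G i))"
proof -
  let ?K = "subgroup_generated G (lcs G i)"
  interpret K: group ?K by simp
  have "lcs G (Suc i) \<lhd> ?K"
    unfolding K.normal_inv_iff
  proof (intro conjI ballI)
    show "subgroup (lcs G (Suc i)) ?K"
      by (rule subgroup_of_subgroup_generated[OF lcs_Suc_subset lcs_subgroup])
    fix x h assume "x \<in> carrier ?K" and "h \<in> lcs G (Suc i)"
    then show "x \<otimes>\<^bsub>?K\<^esub> h \<otimes>\<^bsub>?K\<^esub> inv\<^bsub>?K\<^esub> x \<in> lcs G (Suc i)"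
      using lcs_normal lcs_carrier by (simp add: normal.inv_op_closed2)
  qed
  moreover have "commutator ?K x y \<in> lcs G (Suc i)" if "x \<in> carrier ?K" "y \<in> carrier ?K" for x y
    using that commutator_in_lcs_Suc[of x i y] lcs_carrier by (simp add: commutator_def)
  ultimately show ?thesis by (intro abelian_quotient.intro abelian_quotient_axioms.intro)
qed

lemma lcs_free_factor_eq:
  "lcs_free_factor G i = abelian_quotient.free_factor (lcs G (Suc i)) (subgroup_generated G (lcs G i))"
  by (simp add: lcs_free_factor_def lcs_factor_def)

lemma comm_group_lcs_free_factor: "comm_group (lcs_free_factor G i)"
  using abelian_quotient.free_factor_comm_group[OF lcs_abelian_quotient] lcs_free_factor_eq by simp

lemma group_lcs_free_factor: "group (lcs_free_factor G i)"
  using comm_group_lcs_free_factor comm_group.axioms(2) by blast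

lemma lcs_proj_hom: "lcs_proj G i \<in> hom (subgroup_generated G (lcs G i)) (lcs_free_factor G i)"
  using abelian_quotient.free_proj_hom[OF lcs_abelian_quotient] lcs_free_factor_eq
  by (simp add: lcs_proj_def)

lemma lcs_proj_closed: "x \<in> lcs G i \<Longrightarrow> lcs_proj G i x \<in> carrier (lcs_free_factor G i)"
  using hom_in_carrier[OF lcs_proj_hom] by simp

lemma lcs_proj_surj: "carrier (lcs_free_factor G i) = lcs_proj G i ` lcs G i"
  using abelian_quotient.free_proj_surj[OF lcs_abelian_quotient] lcs_free_factor_eq
  by (simp add: lcs_proj_def)

lemma lcs_proj_mult:
  "x \<in> lcs G i \<Longrightarrow> y \<in> lcs G i \<Longrightarrow>
   lcs_proj G i (x \<otimes> y) = lcs_proj G i x \<otimes>\<^bsub>lcs_free_factor G i\<^esub> lcs_proj G i y"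
  using hom_mult[OF lcs_proj_hom] by simp

lemma lcs_proj_eq_one_iff:
  "x \<in> lcs G i \<Longrightarrow>
   lcs_proj G i x = \<one>\<^bsub>lcs_free_factor G i\<^esub> \<longleftrightarrow> (\<exists>e::nat. e > 0 \<and> x [^] e \<in> lcs G (Suc i))"
  using abelian_quotient.free_proj_eq_one_iff[OF lcs_abelian_quotient, of x i] lcs_free_factor_eq
  by (simp add: lcs_proj_def isolator_def pow_subgroup_generated)

lemma lcs_proj_Suc_eq_one:
  assumes x: "x \<in> lcs G (Suc i)"
  shows "lcs_proj G i x = \<one>\<^bsub>lcs_free_factor G i\<^esub>"
proof -
  have "x \<in> lcs G i" using x lcs_Suc_subset by blast
  moreover have "x [^] (1::nat) \<in> lcs G (Suc i)" using x lcs_carrier by simp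
  moreover have "(0::nat) < 1" by simp
  ultimately show ?thesis using lcs_proj_eq_one_iff[of x i] by blast
qed

lemma lcs_free_factor_torsion_free:
  "D \<in> carrier (lcs_free_factor G i) \<Longrightarrow> e > 0 \<Longrightarrow>
   D [^]\<^bsub>lcs_free_factor G i\<^esub> (e::nat) = \<one>\<^bsub>lcs_free_factor G i\<^esub> \<Longrightarrow> D = \<one>\<^bsub>lcs_free_factor G i\<^esub>"
  using abelian_quotient.free_factor_torsion_free[OF lcs_abelian_quotient] lcs_free_factor_eq by simp

lemma induced_free_aut_lcs_proj:
  assumes \<phi>: "\<phi> \<in> iso G G" and x: "x \<in> lcs G i"
  shows "induced_free_aut \<phi> (lcs_proj G i x) = lcs_proj G i (\<phi> x)"
proof -
  interpret group_hom G G \<phi>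
    using \<phi> by (simp add: group_hom_def group_hom_axioms_def iso_def is_group)
  have "\<phi> \<in> iso (subgroup_generated G (lcs G i)) (subgroup_generated G (lcs G i))"
    using iso_between_subgroups[OF \<phi> _ iso_image_lcs[OF \<phi>]] lcs_carrier by blast
  then show ?thesis
    using abelian_quotient.induced_free_aut_free_proj[OF lcs_abelian_quotient _ iso_image_lcs[OF \<phi>]] x
    by (simp add: lcs_proj_def)
qed

lemma induced_free_aut_hom:
  assumes \<phi>: "\<phi> \<in> iso G G"
  shows "induced_free_aut \<phi> \<in> hom (lcs_free_factor G i) (lcs_free_factor G i)"
proof (rule homI)
  have \<phi>_lcs: "\<phi> x \<in> lcs G i" if "x \<in> lcs G i" for x
    using iso_image_lcs[OF \<phi>] that by blast
  fix D assume "D \<in> carrier (lcs_free_factor G i)"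
  then obtain x where "x \<in> lcs G i" "D = lcs_proj G i x" using lcs_proj_surj by auto
  then show "induced_free_aut \<phi> D \<in> carrier (lcs_free_factor G i)"
    using induced_free_aut_lcs_proj[OF \<phi>] lcs_proj_closed \<phi>_lcs by simp
  fix D' assume "D' \<in> carrier (lcs_free_factor G i)"
  then obtain x' where "x' \<in> lcs G i" "D' = lcs_proj G i x'" using lcs_proj_surj by auto
  have "x \<otimes> x' \<in> lcs G i" using \<open>x \<in> _\<close> \<open>x' \<in> _\<close> subgroup.m_closed[OF lcs_subgroup] by blast
  then have "induced_free_aut \<phi> (D \<otimes>\<^bsub>lcs_free_factor G i\<^esub> D') = lcs_proj G i (\<phi> (x \<otimes> x'))"
    using \<open>D = _\<close> \<open>D' = _\<close> \<open>x \<in> _\<close> \<open>x' \<in> _\<close>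
    by (simp add: induced_free_aut_lcs_proj[OF \<phi>] flip: lcs_proj_mult)
  also have "\<phi> (x \<otimes> x') = \<phi> x \<otimes> \<phi> x'"
    using \<phi> \<open>x \<in> _\<close> \<open>x' \<in> _\<close> lcs_carrier by (simp add: iso_def hom_mult)
  finally show "induced_free_aut \<phi> (D \<otimes>\<^bsub>lcs_free_factor G i\<^esub> D') =
      induced_free_aut \<phi> D \<otimes>\<^bsub>lcs_free_factor G i\<^esub> induced_free_aut \<phi> D'"
    using \<open>D = _\<close> \<open>D' = _\<close> \<open>x \<in> _\<close> \<open>x' \<in> _\<close> \<phi>_lcs
    by (simp add: lcs_proj_mult induced_free_aut_lcs_proj[OF \<phi>])
qed

lemma induced_free_aut_inverse:
  assumes \<phi>: "\<phi> \<in> iso G G" and \<psi>: "\<psi> \<in> iso G G" and \<psi>\<phi>: "\<And>x. x \<in> carrier G \<Longrightarrow> \<psi> (\<phi> x) = x"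
    and D: "D \<in> carrier (lcs_free_factor G i)"
  shows "induced_free_aut \<psi> (induced_free_aut \<phi> D) = D"
proof -
  obtain x where x: "x \<in> lcs G i" "D = lcs_proj G i x" using D lcs_proj_surj by auto
  moreover have "\<phi> x \<in> lcs G i" using iso_image_lcs[OF \<phi>] x by blast
  ultimately show ?thesis
    using induced_free_aut_lcs_proj[OF \<phi>] induced_free_aut_lcs_proj[OF \<psi>] \<psi>\<phi> lcs_carrier by simp
qed

lemma lcs_proj_group_hom:
  "group_hom (subgroup_generated G (lcs G i)) (lcs_free_factor G i) (lcs_proj G i)"
  by (simp add: group_hom_def group_hom_axioms_def lcs_proj_hom group_lcs_free_factor)

lemma lcs_proj_0_hom: "lcs_proj G 0 \<in> hom G (lcs_free_factor G 0)"
  using lcs_proj_hom[of 0] by (simp add: subgroup_generated_group_carrier)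

section \<open>The commutator pairing\<close>

lemma lcs_proj_conj:
  assumes w: "w \<in> lcs G (Suc i)" and g: "g \<in> carrier G"
  shows "lcs_proj G (Suc i) (g \<otimes> w \<otimes> inv g) = lcs_proj G (Suc i) w"
proof -
  interpret F: comm_group "lcs_free_factor G (Suc i)" by (rule comm_group_lcs_free_factor)
  have "g \<otimes> w \<otimes> inv g = inv (commutator G w g) \<otimes> w"
    using w g lcs_carrier by (simp add: commutator_def inv_mult_group m_assoc)
  moreover have "inv (commutator G w g) \<in> lcs G (Suc (Suc i))"
    using commutator_in_lcs_Suc[OF w g] subgroup.m_inv_closed[OF lcs_subgroup] by blast
  moreover have "lcs G (Suc (Suc i)) \<subseteq> lcs G (Suc i)" by (rule lcs_Suc_subset)
  ultimately show ?thesis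
    using w by (auto simp: lcs_proj_mult lcs_proj_Suc_eq_one lcs_proj_closed)
qed

lemma lcs_proj_commutator_mult_left:
  assumes u: "u \<in> lcs G i" and u': "u' \<in> lcs G i" and v: "v \<in> carrier G"
  shows "lcs_proj G (Suc i) (commutator G (u \<otimes> u') v) =
    lcs_proj G (Suc i) (commutator G u v) \<otimes>\<^bsub>lcs_free_factor G (Suc i)\<^esub>
    lcs_proj G (Suc i) (commutator G u' v)"
proof -
  interpret F: comm_group "lcs_free_factor G (Suc i)" by (rule comm_group_lcs_free_factor)
  have uc: "u \<in> carrier G" "u' \<in> carrier G" using u u' lcs_carrier by auto
  have "commutator G (u \<otimes> u') v = (u \<otimes> commutator G u' v \<otimes> inv u) \<otimes> commutator G u v"
    using uc v by (simp add: commutator_def inv_mult_group m_assoc)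
  moreover have "commutator G u' v \<in> lcs G (Suc i)" "commutator G u v \<in> lcs G (Suc i)"
    using commutator_in_lcs_Suc u u' v by auto
  moreover have "u \<otimes> commutator G u' v \<otimes> inv u \<in> lcs G (Suc i)"
    using calculation(2) uc lcs_normal by (simp add: normal.inv_op_closed2)
  ultimately show ?thesis
    using uc by (simp add: lcs_proj_mult lcs_proj_conj lcs_proj_closed F.m_comm)
qed

lemma lcs_proj_commutator_mult_right:
  assumes u: "u \<in> lcs G i" and v: "v \<in> carrier G" and v': "v' \<in> carrier G"
  shows "lcs_proj G (Suc i) (commutator G u (v \<otimes> v')) =
    lcs_proj G (Suc i) (commutator G u v) \<otimes>\<^bsub>lcs_free_factor G (Suc i)\<^esub>
    lcs_proj G (Suc i) (commutator G u v')"
proof -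
  have uc: "u \<in> carrier G" using u lcs_carrier by auto
  have "commutator G u (v \<otimes> v') = commutator G u v \<otimes> (v \<otimes> commutator G u v' \<otimes> inv v)"
    using uc v v' by (simp add: commutator_def inv_mult_group m_assoc)
  moreover have "commutator G u v' \<in> lcs G (Suc i)" "commutator G u v \<in> lcs G (Suc i)"
    using commutator_in_lcs_Suc u v v' by auto
  moreover have "v \<otimes> commutator G u v' \<otimes> inv v \<in> lcs G (Suc i)"
    using calculation(2) v lcs_normal by (simp add: normal.inv_op_closed2)
  ultimately show ?thesis
    using v by (simp add: lcs_proj_mult lcs_proj_conj)
qed

lemma lcs_proj_commutator_hom_left:
  assumes v: "v \<in> carrier G"
  shows "(\<lambda>u. lcs_proj G (Suc i) (commutator G u v))
    \<in> hom (subgroup_generated G (lcs G i)) (lcs_free_factor G (Suc i))"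
  using v by (intro homI) (auto simp: lcs_proj_closed commutator_in_lcs_Suc lcs_proj_commutator_mult_left)

lemma lcs_proj_commutator_hom_right:
  assumes u: "u \<in> lcs G i"
  shows "(\<lambda>v. lcs_proj G (Suc i) (commutator G u v)) \<in> hom G (lcs_free_factor G (Suc i))"
  using u by (intro homI) (auto simp: lcs_proj_closed commutator_in_lcs_Suc lcs_proj_commutator_mult_right)

lemma lcs_proj_commutator_eq_one_left:
  assumes u: "u \<in> lcs G i" and v: "v \<in> carrier G" and u1: "lcs_proj G i u = \<one>\<^bsub>lcs_free_factor G i\<^esub>"
  shows "lcs_proj G (Suc i) (commutator G u v) = \<one>\<^bsub>lcs_free_factor G (Suc i)\<^esub>"
proof -
  obtain e :: nat where e: "e > 0" "u [^] e \<in> lcs G (Suc i)"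
    using u u1 lcs_proj_eq_one_iff by blast
  have "lcs_proj G (Suc i) (commutator G u v) [^]\<^bsub>lcs_free_factor G (Suc i)\<^esub> e
      = lcs_proj G (Suc i) (commutator G (u [^] e) v)"
    using hom_nat_pow[OF lcs_proj_commutator_hom_left[OF v], of u i e] u
    by (simp add: group_lcs_free_factor pow_subgroup_generated)
  also have "\<dots> = \<one>\<^bsub>lcs_free_factor G (Suc i)\<^esub>"
    by (rule lcs_proj_Suc_eq_one[OF commutator_in_lcs_Suc[OF e(2) v]])
  finally show ?thesis
    using lcs_free_factor_torsion_free lcs_proj_closed commutator_in_lcs_Suc u v e(1) by blast
qed

lemma lcs_proj_commutator_eq_one_right:
  assumes u: "u \<in> lcs G i" and v: "v \<in> carrier G" and v1: "lcs_proj G 0 v = \<one>\<^bsub>lcs_free_factor G 0\<^esub>"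
  shows "lcs_proj G (Suc i) (commutator G u v) = \<one>\<^bsub>lcs_free_factor G (Suc i)\<^esub>"
proof -
  obtain e :: nat where e: "e > 0" "v [^] e \<in> lcs G 1"
    using v v1 lcs_proj_eq_one_iff[of v 0] by auto
  have "lcs_proj G (Suc i) (commutator G u v) [^]\<^bsub>lcs_free_factor G (Suc i)\<^esub> e
      = lcs_proj G (Suc i) (commutator G u (v [^] e))"
    using hom_nat_pow[OF lcs_proj_commutator_hom_right[OF u] v] by (simp add: group_lcs_free_factor)
  also have "\<dots> = \<one>\<^bsub>lcs_free_factor G (Suc i)\<^esub>"
    by (rule hom_to_comm_group_trivial_on_lcs_1[OF comm_group_lcs_free_factor lcs_proj_commutator_hom_right[OF u] e(2)])
  finally show ?thesis
    using lcs_free_factor_torsion_free lcs_proj_closed commutator_in_lcs_Suc u v e(1) by blast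
qed

lemma lcs_proj_commutator_cong:
  assumes u: "u \<in> lcs G i" "u' \<in> lcs G i" and v: "v \<in> carrier G" "v' \<in> carrier G"
    and uu': "lcs_proj G i u = lcs_proj G i u'" and vv': "lcs_proj G 0 v = lcs_proj G 0 v'"
  shows "lcs_proj G (Suc i) (commutator G u v) = lcs_proj G (Suc i) (commutator G u' v')"
proof -
  have hom_left: "group_hom (subgroup_generated G (lcs G i)) (lcs_free_factor G (Suc i))
      (\<lambda>u. lcs_proj G (Suc i) (commutator G u v))"
    using lcs_proj_commutator_hom_left[OF v(1)]
    by (simp add: group_hom_def group_hom_axioms_def group_lcs_free_factor)
  have left_eq: "lcs_proj G (Suc i) (commutator G u v) = lcs_proj G (Suc i) (commutator G u' v)"
    by (rule group_hom_eq_if_kernel_subset[OF lcs_proj_group_hom hom_left])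
      (use lcs_proj_commutator_eq_one_left v u uu' in auto)
  have hom_right: "group_hom G (lcs_free_factor G (Suc i)) (\<lambda>v. lcs_proj G (Suc i) (commutator G u' v))"
    using lcs_proj_commutator_hom_right[OF u(2)]
    by (simp add: group_hom_def group_hom_axioms_def group_lcs_free_factor is_group)
  have "group_hom G (lcs_free_factor G 0) (lcs_proj G 0)"
    using lcs_proj_0_hom by (simp add: group_hom_def group_hom_axioms_def group_lcs_free_factor is_group)
  then have "lcs_proj G (Suc i) (commutator G u' v) = lcs_proj G (Suc i) (commutator G u' v')"
    by (rule group_hom_eq_if_kernel_subset[OF _ hom_right])
      (use lcs_proj_commutator_eq_one_right u v vv' in auto)
  with left_eq show ?thesis by simp
qed

end

(* Commutation G_i x G -> G_(i+1) is bilinear modulo G_(i+2); since the free factor of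
   G_(i+1) is torsion-free it also ignores torsion in both arguments
   (lcs_proj_commutator_cong), so it is well defined on representatives. *)
definition lcs_pairing :: "('a, 'b) monoid_scheme \<Rightarrow> nat \<Rightarrow> 'a set set \<Rightarrow> 'a set set \<Rightarrow> 'a set set" where
  "lcs_pairing G i D E = lcs_proj G (Suc i)
     (commutator G (SOME u. u \<in> lcs G i \<and> lcs_proj G i u = D) (SOME v. v \<in> carrier G \<and> lcs_proj G 0 v = E))"

context group
begin

lemma lcs_pairing_lcs_proj:
  assumes u: "u \<in> lcs G i" and v: "v \<in> carrier G"
  shows "lcs_pairing G i (lcs_proj G i u) (lcs_proj G 0 v) = lcs_proj G (Suc i) (commutator G u v)"
proof -
  let ?u = "SOME x. x \<in> lcs G i \<and> lcs_proj G i x = lcs_proj G i u"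
  let ?v = "SOME x. x \<in> carrier G \<and> lcs_proj G 0 x = lcs_proj G 0 v"
  have "?u \<in> lcs G i \<and> lcs_proj G i ?u = lcs_proj G i u" by (rule someI[of _ u]) (use u in simp)
  moreover have "?v \<in> carrier G \<and> lcs_proj G 0 ?v = lcs_proj G 0 v" by (rule someI[of _ v]) (use v in simp)
  ultimately show ?thesis
    unfolding lcs_pairing_def using lcs_proj_commutator_cong u v by blast
qed

lemma lcs_pairing_closed:
  "D \<in> carrier (lcs_free_factor G i) \<Longrightarrow> E \<in> carrier (lcs_free_factor G 0) \<Longrightarrow>
   lcs_pairing G i D E \<in> carrier (lcs_free_factor G (Suc i))"
  using lcs_proj_surj[of i] lcs_proj_surj[of 0]
  by (auto simp: lcs_pairing_lcs_proj lcs_proj_closed commutator_in_lcs_Suc)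

lemma lcs_pairing_hom_left:
  assumes E: "E \<in> carrier (lcs_free_factor G 0)"
  shows "(\<lambda>D. lcs_pairing G i D E) \<in> hom (lcs_free_factor G i) (lcs_free_factor G (Suc i))"
proof (rule homI)
  obtain v where v: "v \<in> carrier G" "E = lcs_proj G 0 v" using E lcs_proj_surj[of 0] by auto
  fix D D' assume "D \<in> carrier (lcs_free_factor G i)" "D' \<in> carrier (lcs_free_factor G i)"
  then obtain u u' where "u \<in> lcs G i" "u' \<in> lcs G i" "D = lcs_proj G i u" "D' = lcs_proj G i u'"
    using lcs_proj_surj by auto
  then show "lcs_pairing G i (D \<otimes>\<^bsub>lcs_free_factor G i\<^esub> D') E =
      lcs_pairing G i D E \<otimes>\<^bsub>lcs_free_factor G (Suc i)\<^esub> lcs_pairing G i D' E"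
    using v by (simp add: lcs_pairing_lcs_proj lcs_proj_commutator_mult_left subgroup.m_closed[OF lcs_subgroup]
        flip: lcs_proj_mult)
qed (use E lcs_pairing_closed in blast)

lemma lcs_pairing_hom_right:
  assumes D: "D \<in> carrier (lcs_free_factor G i)"
  shows "(\<lambda>E. lcs_pairing G i D E) \<in> hom (lcs_free_factor G 0) (lcs_free_factor G (Suc i))"
proof (rule homI)
  obtain u where u: "u \<in> lcs G i" "D = lcs_proj G i u" using D lcs_proj_surj by auto
  fix E E' assume "E \<in> carrier (lcs_free_factor G 0)" "E' \<in> carrier (lcs_free_factor G 0)"
  then obtain v v' where "v \<in> carrier G" "v' \<in> carrier G" "E = lcs_proj G 0 v" "E' = lcs_proj G 0 v'"
    using lcs_proj_surj[of 0] by auto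
  then show "lcs_pairing G i D (E \<otimes>\<^bsub>lcs_free_factor G 0\<^esub> E') =
      lcs_pairing G i D E \<otimes>\<^bsub>lcs_free_factor G (Suc i)\<^esub> lcs_pairing G i D E'"
    using u by (simp add: lcs_pairing_lcs_proj lcs_proj_commutator_mult_right flip: hom_mult[OF lcs_proj_0_hom])
qed (use D lcs_pairing_closed in blast)

lemma lcs_pairing_induced_free_aut:
  assumes \<phi>: "\<phi> \<in> iso G G"
    and D: "D \<in> carrier (lcs_free_factor G i)" and E: "E \<in> carrier (lcs_free_factor G 0)"
  shows "induced_free_aut \<phi> (lcs_pairing G i D E) =
    lcs_pairing G i (induced_free_aut \<phi> D) (induced_free_aut \<phi> E)"
proof -
  obtain u v where uv: "u \<in> lcs G i" "D = lcs_proj G i u" "v \<in> carrier G" "E = lcs_proj G 0 v"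
    using D E lcs_proj_surj[of i] lcs_proj_surj[of 0] by auto
  have "\<phi> u \<in> lcs G i" "\<phi> v \<in> carrier G"
    using iso_image_lcs[OF \<phi>, of i] iso_image_lcs[OF \<phi>, of 0] uv by auto
  moreover have "\<phi> (commutator G u v) = commutator G (\<phi> u) (\<phi> v)"
    using \<phi> uv lcs_carrier by (simp add: iso_def hom_commutator)
  ultimately show ?thesis
    using uv induced_free_aut_lcs_proj[OF \<phi>] induced_free_aut_lcs_proj[OF \<phi>, of v 0]
    by (simp add: lcs_pairing_lcs_proj commutator_in_lcs_Suc)
qed

end

section \<open>Orbits of polynomial growth\<close>

definition bounded_span :: "('c, 'd) monoid_scheme \<Rightarrow> 'c set \<Rightarrow> real \<Rightarrow> 'c set" where
  "bounded_span F X R = {finprod F (\<lambda>x. x [^]\<^bsub>F\<^esub> a x) X | a. \<forall>x\<in>X. real_of_int \<bar>a x\<bar> \<le> R}"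

lemma hom_finprod:
  assumes F: "comm_group F" and H: "comm_group H" and h: "h \<in> hom F H" and f: "f \<in> A \<rightarrow> carrier F"
  shows "h (finprod F f A) = finprod H (\<lambda>x. h (f x)) A"
proof -
  interpret F: comm_group F by (rule F)
  interpret H: comm_group H by (rule H)
  interpret group_hom F H h by (simp add: group_hom_def group_hom_axioms_def h F.is_group H.is_group)
  show ?thesis
    using f
  proof (induction A rule: infinite_finite_induct)
    case (insert x A)
    then show ?case by (simp add: Pi_def)
  qed simp_all
qed

lemma funpow_hom: "f \<in> hom G G \<Longrightarrow> (f ^^ k) \<in> hom G G"
  by (induction k) (auto simp: hom_def Pi_def)

context comm_group
begin

lemma finprod_int_pow:
  assumes "f \<in> A \<rightarrow> carrier G"
  shows "finprod G f A [^] (c::int) = finprod G (\<lambda>x. f x [^] c) A"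
  using assms
proof (induction A rule: infinite_finite_induct)
  case (insert x A)
  then show ?case by (simp add: Pi_def int_pow_distrib)
qed simp_all

lemma bounded_span_closed: "X \<subseteq> carrier G \<Longrightarrow> bounded_span G X R \<subseteq> carrier G"
  by (auto simp: bounded_span_def Pi_def subset_iff)

lemma one_in_bounded_span: "R \<ge> 0 \<Longrightarrow> \<one> \<in> bounded_span G X R"
  unfolding bounded_span_def by (rule CollectI, rule exI[of _ "\<lambda>_. 0"]) (simp add: finprod_one_eqI)

lemma bounded_span_mono:
  assumes Y: "finite Y" "Y \<subseteq> carrier G" and XY: "X \<subseteq> Y" and R: "R \<le> R'" "0 \<le> R'"
  shows "bounded_span G X R \<subseteq> bounded_span G Y R'"
proof
  fix y assume "y \<in> bounded_span G X R"
  then obtain a where a: "y = finprod G (\<lambda>x. x [^] a x) X" "\<forall>x\<in>X. real_of_int \<bar>a x\<bar> \<le> R"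
    by (auto simp: bounded_span_def)
  define a' where "a' x = (if x \<in> X then a x else 0)" for x
  have "y = finprod G (\<lambda>x. x [^] a' x) Y"
    unfolding a(1) by (rule finprod_mono_neutral_cong_left) (use Y XY in \<open>auto simp: a'_def Pi_def\<close>)
  moreover have "\<forall>x\<in>Y. real_of_int \<bar>a' x\<bar> \<le> R'" using a(2) R by (auto simp: a'_def)
  ultimately show "y \<in> bounded_span G Y R'" by (auto simp: bounded_span_def)
qed

lemma bounded_span_mult:
  assumes X: "X \<subseteq> carrier G" and y: "y \<in> bounded_span G X R" and z: "z \<in> bounded_span G X S"
  shows "y \<otimes> z \<in> bounded_span G X (R + S)"
proof -
  obtain a where a: "y = finprod G (\<lambda>x. x [^] a x) X" "\<forall>x\<in>X. real_of_int \<bar>a x\<bar> \<le> R"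
    using y by (auto simp: bounded_span_def)
  obtain b where b: "z = finprod G (\<lambda>x. x [^] b x) X" "\<forall>x\<in>X. real_of_int \<bar>b x\<bar> \<le> S"
    using z by (auto simp: bounded_span_def)
  have "y \<otimes> z = finprod G (\<lambda>x. x [^] a x \<otimes> x [^] b x) X"
    unfolding a(1) b(1) using X by (subst finprod_multf) (auto simp: Pi_def)
  also have "\<dots> = finprod G (\<lambda>x. x [^] (a x + b x)) X"
    by (rule finprod_cong') (use X in \<open>auto simp: Pi_def int_pow_mult\<close>)
  finally show ?thesis
    using a(2) b(2) unfolding bounded_span_def
    by (intro CollectI exI[of _ "\<lambda>x. a x + b x"]) (force simp: abs_le_iff)
qed

lemma bounded_span_int_pow:
  assumes X: "X \<subseteq> carrier G" and y: "y \<in> bounded_span G X R"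
  shows "y [^] (c::int) \<in> bounded_span G X (real_of_int \<bar>c\<bar> * R)"
proof -
  obtain a where a: "y = finprod G (\<lambda>x. x [^] a x) X" "\<forall>x\<in>X. real_of_int \<bar>a x\<bar> \<le> R"
    using y by (auto simp: bounded_span_def)
  have "y [^] c = finprod G (\<lambda>x. (x [^] a x) [^] c) X"
    unfolding a(1) using X by (subst finprod_int_pow) (auto simp: Pi_def)
  also have "\<dots> = finprod G (\<lambda>x. x [^] (c * a x)) X"
    by (rule finprod_cong') (use X in \<open>auto simp: Pi_def int_pow_pow mult.commute\<close>)
  finally show ?thesis
    using a(2) unfolding bounded_span_def
    by (intro CollectI exI[of _ "\<lambda>x. c * a x"]) (auto simp: abs_mult mult_left_mono)
qed

lemma bounded_span_inv:
  assumes X: "X \<subseteq> carrier G" and y: "y \<in> bounded_span G X R"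
  shows "inv y \<in> bounded_span G X R"
proof -
  have yc: "y \<in> carrier G" using y bounded_span_closed[OF X] by blast
  have "inv y = y [^] (-1 :: int)"
    using int_pow_neg[OF yc, of 1] int_pow_1[OF yc] by simp
  then show ?thesis using bounded_span_int_pow[OF X y, of "-1"] by simp
qed

lemma int_pow_in_bounded_span:
  assumes X: "finite X" "X \<subseteq> carrier G" and x: "x \<in> X"
  shows "x [^] (c::int) \<in> bounded_span G X (real_of_int \<bar>c\<bar>)"
proof -
  define a where "a y = (if y = x then c else 0)" for y
  have "finprod G (\<lambda>y. y [^] a y) X = finprod G (\<lambda>y. if y = x then y [^] c else \<one>) X"
    by (rule finprod_cong') (use X in \<open>auto simp: a_def Pi_def\<close>)
  also have "\<dots> = x [^] c"
    using finprod_singleton_swap[OF x X(1), of "\<lambda>y. y [^] c"] X x by (auto simp: Pi_def)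
  finally show ?thesis
    unfolding bounded_span_def by (intro CollectI exI[of _ a]) (auto simp: a_def)
qed

lemma finprod_in_bounded_span:
  assumes X: "X \<subseteq> carrier G" and I: "finite I" and R: "R \<ge> 0"
    and f: "\<And>i. i \<in> I \<Longrightarrow> f i \<in> bounded_span G X R"
  shows "finprod G f I \<in> bounded_span G X (real (card I) * R)"
  using I f
proof (induction I rule: finite_induct)
  case empty
  then show ?case using one_in_bounded_span R by simp
next
  case (insert i I)
  then have "f \<in> I \<rightarrow> carrier G" "f i \<in> carrier G" using bounded_span_closed[OF X] by auto
  then have "finprod G f (insert i I) = f i \<otimes> finprod G f I" using insert by simp
  also have "\<dots> \<in> bounded_span G X (R + real (card I) * R)"
    by (rule bounded_span_mult[OF X]) (use insert in auto)
  finally show ?case using insert by (simp add: algebra_simps)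
qed

lemma hom_image_bounded_span:
  assumes H: "comm_group H" and f: "f \<in> hom G H" and X: "finite X" "X \<subseteq> carrier G"
    and y: "y \<in> bounded_span G X R" and R: "R \<ge> 0"
  shows "f y \<in> bounded_span H (f ` X) (real (card X) * R)"
proof -
  interpret H: comm_group H by (rule H)
  have fX: "finite (f ` X)" "f ` X \<subseteq> carrier H" using X f by (auto simp: hom_in_carrier)
  obtain a where a: "y = finprod G (\<lambda>x. x [^] a x) X" "\<forall>x\<in>X. real_of_int \<bar>a x\<bar> \<le> R"
    using y by (auto simp: bounded_span_def)
  have "f y = finprod H (\<lambda>x. f (x [^] a x)) X"
    unfolding a(1) using X by (intro hom_finprod[OF comm_group_axioms H f]) (auto simp: Pi_def)
  also have "\<dots> = finprod H (\<lambda>x. f x [^]\<^bsub>H\<^esub> a x) X"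
    using X hom_int_pow[OF f _ is_group H.is_group] by (intro H.finprod_cong') (auto simp: Pi_def hom_in_carrier[OF f])
  also have "\<dots> \<in> bounded_span H (f ` X) (real (card X) * R)"
  proof (rule H.finprod_in_bounded_span[OF fX(2) X(1) R])
    fix x assume x: "x \<in> X"
    then have "f x [^]\<^bsub>H\<^esub> a x \<in> bounded_span H (f ` X) (real_of_int \<bar>a x\<bar>)"
      using H.int_pow_in_bounded_span[OF fX] by simp
    also have "\<dots> \<subseteq> bounded_span H (f ` X) R"
      using H.bounded_span_mono[OF fX order_refl] a(2) x R by simp
    finally show "f x [^]\<^bsub>H\<^esub> a x \<in> bounded_span H (f ` X) R" .
  qed
  finally show ?thesis .
qed

end

lemma bilinear_bounded_span:
  assumes F1: "comm_group F1" and F2: "comm_group F2" and F3: "comm_group F3"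
    and left: "\<And>y. y \<in> carrier F2 \<Longrightarrow> (\<lambda>x. \<beta> x y) \<in> hom F1 F3"
    and right: "\<And>x. x \<in> carrier F1 \<Longrightarrow> (\<lambda>y. \<beta> x y) \<in> hom F2 F3"
    and X: "finite X" "X \<subseteq> carrier F1" and Z: "finite Z" "Z \<subseteq> carrier F2"
    and x: "x \<in> bounded_span F1 X R" and y: "y \<in> bounded_span F2 Z S" and R: "R \<ge> 0" and S: "S \<ge> 0"
  shows "\<beta> x y \<in> bounded_span F3 (case_prod \<beta> ` (X \<times> Z)) (real (card X) * real (card Z) * R * S)"
proof -
  interpret F1: comm_group F1 by (rule F1)
  interpret F2: comm_group F2 by (rule F2)
  interpret F3: comm_group F3 by (rule F3)
  let ?Y = "case_prod \<beta> ` (X \<times> Z)" and ?S = "real (card Z) * S"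
  have yc: "y \<in> carrier F2" using y F2.bounded_span_closed[OF Z(2)] by blast
  have "\<beta> x' z \<in> carrier F3" if "x' \<in> X" "z \<in> Z" for x' z
    using hom_in_carrier[OF right, of x' z] that X Z by auto
  then have Y: "finite ?Y" "?Y \<subseteq> carrier F3" using X Z by auto
  obtain a where a: "x = finprod F1 (\<lambda>x'. x' [^]\<^bsub>F1\<^esub> a x') X" "\<forall>x'\<in>X. real_of_int \<bar>a x'\<bar> \<le> R"
    using x by (auto simp: bounded_span_def)
  have \<beta>_y: "\<beta> x' y \<in> bounded_span F3 ?Y ?S" if x': "x' \<in> X" for x'
  proof -
    have "\<beta> x' y \<in> bounded_span F3 (\<beta> x' ` Z) ?S"
      using F2.hom_image_bounded_span[OF F3 right Z y S] x' X by auto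
    also have "\<dots> \<subseteq> bounded_span F3 ?Y ?S"
      using x' S by (intro F3.bounded_span_mono[OF Y]) auto
    finally show ?thesis .
  qed
  have "\<beta> x y = finprod F3 (\<lambda>x'. \<beta> (x' [^]\<^bsub>F1\<^esub> a x') y) X"
    unfolding a(1) using X by (intro hom_finprod[OF F1 F3 left[OF yc]]) (auto simp: Pi_def)
  also have "\<dots> = finprod F3 (\<lambda>x'. \<beta> x' y [^]\<^bsub>F3\<^esub> a x') X"
  proof (intro F3.finprod_cong'[OF refl])
    fix x' assume "x' \<in> X"
    then show "\<beta> (x' [^]\<^bsub>F1\<^esub> a x') y = \<beta> x' y [^]\<^bsub>F3\<^esub> a x'"
      using X hom_int_pow[OF left[OF yc] _ F1.is_group F3.is_group] by auto
  next
    show "(\<lambda>x'. \<beta> x' y [^]\<^bsub>F3\<^esub> a x') \<in> X \<rightarrow> carrier F3"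
      using \<beta>_y F3.bounded_span_closed[OF Y(2)] by blast
  qed
  also have "\<dots> \<in> bounded_span F3 ?Y (real (card X) * (R * ?S))"
  proof (rule F3.finprod_in_bounded_span[OF Y(2) X(1)])
    show "0 \<le> R * ?S" using R S by simp
    fix x' assume x': "x' \<in> X"
    have "\<beta> x' y [^]\<^bsub>F3\<^esub> a x' \<in> bounded_span F3 ?Y (real_of_int \<bar>a x'\<bar> * ?S)"
      by (rule F3.bounded_span_int_pow[OF Y(2) \<beta>_y[OF x']])
    also have "\<dots> \<subseteq> bounded_span F3 ?Y (R * ?S)"
      using a(2) x' R S by (intro F3.bounded_span_mono[OF Y] mult_right_mono) auto
    finally show "\<beta> x' y [^]\<^bsub>F3\<^esub> a x' \<in> bounded_span F3 ?Y (R * ?S)" .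
  qed
  finally show ?thesis by (simp add: algebra_simps)
qed

definition poly_orbit :: "('c, 'd) monoid_scheme \<Rightarrow> ('c \<Rightarrow> 'c) \<Rightarrow> 'c \<Rightarrow> bool" where
  "poly_orbit F \<theta> x \<longleftrightarrow> (\<exists>X C d. finite X \<and> X \<subseteq> carrier F \<and> C \<ge> 0 \<and>
     (\<forall>k. (\<theta> ^^ k) x \<in> bounded_span F X (C * real (Suc k) ^ d)))"

context comm_group
begin

lemma poly_orbit_mult:
  assumes \<theta>: "\<theta> \<in> hom G G" and x: "x \<in> carrier G" and y: "y \<in> carrier G"
    and px: "poly_orbit G \<theta> x" and py: "poly_orbit G \<theta> y"
  shows "poly_orbit G \<theta> (x \<otimes> y)"
proof -
  obtain X C d where X: "finite X" "X \<subseteq> carrier G" "C \<ge> 0"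
    and orb_x: "\<And>k. (\<theta> ^^ k) x \<in> bounded_span G X (C * real (Suc k) ^ d)"
    using px unfolding poly_orbit_def by blast
  obtain Y C' d' where Y: "finite Y" "Y \<subseteq> carrier G" "C' \<ge> 0"
    and orb_y: "\<And>k. (\<theta> ^^ k) y \<in> bounded_span G Y (C' * real (Suc k) ^ d')"
    using py unfolding poly_orbit_def by blast
  have XY: "finite (X \<union> Y)" "X \<union> Y \<subseteq> carrier G" using X Y by auto
  have "(\<theta> ^^ k) (x \<otimes> y) \<in> bounded_span G (X \<union> Y) ((C + C') * real (Suc k) ^ (d + d'))" for k
  proof -
    have "C * real (Suc k) ^ d \<le> C * real (Suc k) ^ (d + d')"
      using X(3) by (intro mult_left_mono power_increasing) auto
    then have "(\<theta> ^^ k) x \<in> bounded_span G (X \<union> Y) (C * real (Suc k) ^ (d + d'))"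
      using orb_x bounded_span_mono[OF XY, of X] X(3) by fastforce
    moreover have "C' * real (Suc k) ^ d' \<le> C' * real (Suc k) ^ (d + d')"
      using Y(3) by (intro mult_left_mono power_increasing) auto
    then have "(\<theta> ^^ k) y \<in> bounded_span G (X \<union> Y) (C' * real (Suc k) ^ (d + d'))"
      using orb_y bounded_span_mono[OF XY, of Y] Y(3) by fastforce
    ultimately have "(\<theta> ^^ k) x \<otimes> (\<theta> ^^ k) y \<in> bounded_span G (X \<union> Y) ((C + C') * real (Suc k) ^ (d + d'))"
      using bounded_span_mult[OF XY(2)] by (simp add: distrib_right)
    then show ?thesis by (simp add: hom_mult[OF funpow_hom[OF \<theta>] x y])
  qed
  then show ?thesis
    unfolding poly_orbit_def using XY X(3) Y(3) by (intro exI[of _ "X \<union> Y"] exI[of _ "C + C'"]) auto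
qed

lemma poly_orbit_inv:
  assumes \<theta>: "\<theta> \<in> hom G G" and x: "x \<in> carrier G" and px: "poly_orbit G \<theta> x"
  shows "poly_orbit G \<theta> (inv x)"
proof -
  obtain X C d where X: "finite X" "X \<subseteq> carrier G" "C \<ge> 0"
    and orb_x: "\<And>k. (\<theta> ^^ k) x \<in> bounded_span G X (C * real (Suc k) ^ d)"
    using px unfolding poly_orbit_def by blast
  have "(\<theta> ^^ k) (inv x) = inv ((\<theta> ^^ k) x)" for k
    using group_hom.hom_inv[of G G "\<theta> ^^ k" x] funpow_hom[OF \<theta>] x
    by (simp add: group_hom_def group_hom_axioms_def is_group)
  then have "(\<theta> ^^ k) (inv x) \<in> bounded_span G X (C * real (Suc k) ^ d)" for k
    using bounded_span_inv[OF X(2) orb_x] by simp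
  then show ?thesis unfolding poly_orbit_def using X by blast
qed

lemma poly_orbit_subgroup:
  assumes \<theta>: "\<theta> \<in> hom G G"
  shows "subgroup {x \<in> carrier G. poly_orbit G \<theta> x} G"
proof (rule subgroupI)
  have "(\<theta> ^^ k) \<one> = \<one>" for k
    using funpow_hom[OF \<theta>] by (simp add: group_hom.hom_one group_hom_def group_hom_axioms_def is_group)
  then have "poly_orbit G \<theta> \<one>"
    unfolding poly_orbit_def
    by (intro exI[of _ "{}"] exI[of _ 0] exI[of _ 0]) (simp add: one_in_bounded_span)
  then show "{x \<in> carrier G. poly_orbit G \<theta> x} \<noteq> {}" by blast
qed (auto simp: poly_orbit_inv[OF \<theta>] poly_orbit_mult[OF \<theta>])

end

lemma poly_orbit_bilinear:
  assumes F1: "comm_group F1" and F2: "comm_group F2" and F3: "comm_group F3"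
    and left: "\<And>y. y \<in> carrier F2 \<Longrightarrow> (\<lambda>x. \<beta> x y) \<in> hom F1 F3"
    and right: "\<And>x. x \<in> carrier F1 \<Longrightarrow> (\<lambda>y. \<beta> x y) \<in> hom F2 F3"
    and \<theta>1: "\<theta>1 \<in> hom F1 F1" and \<theta>2: "\<theta>2 \<in> hom F2 F2"
    and equivariant: "\<And>x y. x \<in> carrier F1 \<Longrightarrow> y \<in> carrier F2 \<Longrightarrow> \<theta>3 (\<beta> x y) = \<beta> (\<theta>1 x) (\<theta>2 y)"
    and x: "x \<in> carrier F1" "poly_orbit F1 \<theta>1 x" and y: "y \<in> carrier F2" "poly_orbit F2 \<theta>2 y"
  shows "poly_orbit F3 \<theta>3 (\<beta> x y)"
proof -
  obtain X C d where X: "finite X" "X \<subseteq> carrier F1" "C \<ge> 0"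
    and orb_x: "\<And>k. (\<theta>1 ^^ k) x \<in> bounded_span F1 X (C * real (Suc k) ^ d)"
    using x(2) unfolding poly_orbit_def by blast
  obtain Z C' d' where Z: "finite Z" "Z \<subseteq> carrier F2" "C' \<ge> 0"
    and orb_y: "\<And>k. (\<theta>2 ^^ k) y \<in> bounded_span F2 Z (C' * real (Suc k) ^ d')"
    using y(2) unfolding poly_orbit_def by blast
  let ?Y = "case_prod \<beta> ` (X \<times> Z)" and ?C = "real (card X) * real (card Z) * C * C'"
  have iterate: "(\<theta>3 ^^ k) (\<beta> x y) = \<beta> ((\<theta>1 ^^ k) x) ((\<theta>2 ^^ k) y)" for k
    using hom_in_carrier[OF funpow_hom[OF \<theta>1]] hom_in_carrier[OF funpow_hom[OF \<theta>2]] x y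
    by (induction k) (simp_all add: equivariant)
  have "\<beta> x' z \<in> carrier F3" if "x' \<in> X" "z \<in> Z" for x' z
    using hom_in_carrier[OF right, of x' z] that X Z by auto
  then have "finite ?Y" "?Y \<subseteq> carrier F3" using X Z by auto
  moreover have "(\<theta>3 ^^ k) (\<beta> x y) \<in> bounded_span F3 ?Y (?C * real (Suc k) ^ (d + d'))" for k
  proof -
    have eq: "real (card X) * real (card Z) * (C * real (Suc k) ^ d) * (C' * real (Suc k) ^ d')
        = ?C * real (Suc k) ^ (d + d')"
      by (simp add: power_add mult_ac)
    have "\<beta> ((\<theta>1 ^^ k) x) ((\<theta>2 ^^ k) y) \<in> bounded_span F3 ?Y
        (real (card X) * real (card Z) * (C * real (Suc k) ^ d) * (C' * real (Suc k) ^ d'))"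
      by (rule bilinear_bounded_span[OF F1 F2 F3 left right X(1,2) Z(1,2) orb_x orb_y])
        (use X(3) Z(3) in auto)
    then show ?thesis by (simp only: iterate eq)
  qed
  ultimately show ?thesis
    unfolding poly_orbit_def using X(3) Z(3) by (intro exI[of _ ?Y] exI[of _ ?C]) auto
qed

context comm_group
begin

lemma zcomb_eq_finprod:
  assumes b: "b ` {..<m} \<subseteq> carrier G"
  shows "zcomb G b a m = finprod G (\<lambda>j. b j [^] a j) {..<m}"
proof -
  have "foldr (\<lambda>j acc. b j [^] a j \<otimes> acc) xs \<one> = finprod G (\<lambda>j. b j [^] (a j :: int)) (set xs)"
    if "distinct xs" "set xs \<subseteq> {..<m}" for xs
    using that
  proof (induction xs)
    case (Cons x xs)
    then have "(\<lambda>j. b j [^] a j) \<in> set xs \<rightarrow> carrier G" "b x [^] a x \<in> carrier G"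
      using b by auto
    then show ?case using Cons by simp
  qed simp
  from this[of "[0..<m]"] show ?thesis by (simp add: zcomb_def atLeast0LessThan)
qed

lemma zcomb_closed: "b ` {..<m} \<subseteq> carrier G \<Longrightarrow> zcomb G b a m \<in> carrier G"
  by (auto simp: zcomb_eq_finprod image_subset_iff intro!: finprod_closed)

lemma zcomb_cong: "(\<And>j. j < m \<Longrightarrow> a j = a' j) \<Longrightarrow> zcomb G b a m = zcomb G b a' m"
  unfolding zcomb_def by (intro List.foldr_cong) auto

lemma zcomb_add:
  assumes b: "b ` {..<m} \<subseteq> carrier G"
  shows "zcomb G b (\<lambda>j. a j + a' j) m = zcomb G b a m \<otimes> zcomb G b a' m"
proof -
  have "zcomb G b (\<lambda>j. a j + a' j) m = finprod G (\<lambda>j. b j [^] a j \<otimes> b j [^] a' j) {..<m}"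
    unfolding zcomb_eq_finprod[OF b] by (rule finprod_cong') (use b in \<open>auto simp: Pi_def int_pow_mult\<close>)
  also have "\<dots> = zcomb G b a m \<otimes> zcomb G b a' m"
    unfolding zcomb_eq_finprod[OF b] by (rule finprod_multf) (use b in \<open>auto simp: Pi_def\<close>)
  finally show ?thesis .
qed

lemma zcomb_scale:
  assumes b: "b ` {..<m} \<subseteq> carrier G"
  shows "zcomb G b (\<lambda>j. c * a j) m = zcomb G b a m [^] c"
proof -
  have "zcomb G b a m [^] c = finprod G (\<lambda>j. (b j [^] a j) [^] c) {..<m}"
    unfolding zcomb_eq_finprod[OF b] by (rule finprod_int_pow) (use b in \<open>auto simp: Pi_def\<close>)
  also have "\<dots> = zcomb G b (\<lambda>j. c * a j) m"
    unfolding zcomb_eq_finprod[OF b]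
    by (rule finprod_cong') (use b in \<open>auto simp: Pi_def int_pow_pow mult.commute\<close>)
  finally show ?thesis by simp
qed

lemma zcomb_sum:
  assumes b: "b ` {..<m} \<subseteq> carrier G" and X: "finite X"
  shows "zcomb G b (\<lambda>j. \<Sum>x\<in>X. f x j) m = finprod G (\<lambda>x. zcomb G b (f x) m) X"
  using X
proof (induction X rule: finite_induct)
  case empty
  have "zcomb G b (\<lambda>_. 0) m = \<one>" by (simp add: zcomb_eq_finprod[OF b] finprod_one_eqI)
  then show ?case by simp
next
  case (insert x X)
  have "zcomb G b (\<lambda>j. \<Sum>y\<in>insert x X. f y j) m = zcomb G b (\<lambda>j. f x j + (\<Sum>y\<in>X. f y j)) m"
    using insert by simp
  also have "\<dots> = zcomb G b (f x) m \<otimes> zcomb G b (\<lambda>j. \<Sum>y\<in>X. f y j) m" by (rule zcomb_add[OF b])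
  also have "\<dots> = finprod G (\<lambda>x. zcomb G b (f x) m) (insert x X)"
    using insert zcomb_closed[OF b] by (simp add: Pi_def)
  finally show ?case .
qed

lemma zbasis_closed: "is_zbasis G m b \<Longrightarrow> b ` {..<m} \<subseteq> carrier G"
  by (auto simp: is_zbasis_def)

lemma zcomb_zcoords:
  assumes B: "is_zbasis G m b" and x: "x \<in> carrier G"
  shows "zcomb G b (zcoords G m b x) m = x"
proof -
  have "\<exists>!a. (\<forall>j\<ge>m. a j = 0) \<and> x = zcomb G b a m" using B x by (simp add: is_zbasis_def)
  then have "(\<forall>j\<ge>m. zcoords G m b x j = 0) \<and> x = zcomb G b (zcoords G m b x) m"
    unfolding zcoords_def by (rule theI')
  then show ?thesis by simp
qed

lemma zcoords_zcomb:
  assumes B: "is_zbasis G m b"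
  shows "zcoords G m b (zcomb G b a m) = (\<lambda>j. if j < m then a j else 0)"
proof -
  let ?a = "\<lambda>j. if j < m then a j else 0"
  have eq: "zcomb G b a m = zcomb G b ?a m" by (rule zcomb_cong) simp
  have "\<exists>!a'. (\<forall>j\<ge>m. a' j = 0) \<and> zcomb G b ?a m = zcomb G b a' m"
    using B zcomb_closed[OF zbasis_closed[OF B]] by (simp add: is_zbasis_def)
  then show ?thesis unfolding zcoords_def eq by (rule the1_equality) auto
qed

lemma hom_zcomb:
  assumes B: "is_zbasis G m b" and f: "f \<in> hom G G"
  shows "f (zcomb G b c m) = zcomb G b (\<lambda>p. \<Sum>j<m. c j * zcoords G m b (f (b j)) p) m"
proof -
  note bc = zbasis_closed[OF B]
  have "f (zcomb G b c m) = finprod G (\<lambda>j. f (b j [^] c j)) {..<m}"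
    unfolding zcomb_eq_finprod[OF bc] using bc
    by (intro hom_finprod[OF comm_group_axioms comm_group_axioms f]) (auto simp: Pi_def)
  also have "\<dots> = finprod G (\<lambda>j. zcomb G b (\<lambda>p. c j * zcoords G m b (f (b j)) p) m) {..<m}"
  proof (rule finprod_cong'[OF refl])
    fix j assume "j \<in> {..<m}"
    then have bj: "b j \<in> carrier G" using bc by auto
    have "f (b j [^] c j) = f (b j) [^] c j" by (rule hom_int_pow[OF f bj is_group is_group])
    also have "f (b j) = zcomb G b (zcoords G m b (f (b j))) m"
      using zcomb_zcoords[OF B] hom_in_carrier[OF f bj] by simp
    finally show "f (b j [^] c j) = zcomb G b (\<lambda>p. c j * zcoords G m b (f (b j)) p) m"
      by (simp add: zcomb_scale[OF bc])
  qed (use zcomb_closed[OF bc] in auto)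
  also have "\<dots> = zcomb G b (\<lambda>p. \<Sum>j<m. c j * zcoords G m b (f (b j)) p) m"
    by (rule zcomb_sum[symmetric]) (simp_all add: bc)
  finally show ?thesis .
qed

lemma basis_matrix_comp:
  assumes B: "is_zbasis G m b" and f: "f \<in> hom G G" and g: "g \<in> hom G G"
  shows "basis_matrix G m b (\<lambda>x. g (f x)) = basis_matrix G m b g * basis_matrix G m b f"
proof (rule eq_matI)
  fix p j assume "p < dim_row (basis_matrix G m b g * basis_matrix G m b f)"
    and "j < dim_col (basis_matrix G m b g * basis_matrix G m b f)"
  then have p: "p < m" and j: "j < m" by (auto simp: basis_matrix_def)
  have "g (f (b j)) = g (zcomb G b (zcoords G m b (f (b j))) m)"
    using zcomb_zcoords[OF B] f zbasis_closed[OF B] j by (simp add: hom_in_carrier image_subset_iff)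
  also have "\<dots> = zcomb G b (\<lambda>p. \<Sum>l<m. zcoords G m b (f (b j)) l * zcoords G m b (g (b l)) p) m"
    by (rule hom_zcomb[OF B g])
  finally have "zcoords G m b (g (f (b j))) p = (\<Sum>l<m. zcoords G m b (f (b j)) l * zcoords G m b (g (b l)) p)"
    using zcoords_zcomb[OF B] p by simp
  also have "\<dots> = row (basis_matrix G m b g) p \<bullet> col (basis_matrix G m b f) j"
    unfolding scalar_prod_def using p j
    by (auto simp: basis_matrix_def lessThan_atLeast0 intro!: sum.cong)
  finally show "basis_matrix G m b (\<lambda>x. g (f x)) $$ (p, j) = (basis_matrix G m b g * basis_matrix G m b f) $$ (p, j)"
    using p j by (simp add: basis_matrix_def)
qed (auto simp: basis_matrix_def)

lemma basis_matrix_id: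
  assumes B: "is_zbasis G m b" and f: "\<And>j. j < m \<Longrightarrow> f (b j) = b j"
  shows "basis_matrix G m b f = 1\<^sub>m m"
proof (rule eq_matI)
  note bc = zbasis_closed[OF B]
  fix p j assume "p < dim_row (1\<^sub>m m :: int mat)" "j < dim_col (1\<^sub>m m :: int mat)"
  then have p: "p < m" and j: "j < m" by auto
  have "zcomb G b (\<lambda>p. if p = j then 1 else 0) m = finprod G (\<lambda>p. if p = j then b p else \<one>) {..<m}"
    unfolding zcomb_eq_finprod[OF bc] by (rule finprod_cong') (use bc in \<open>auto simp: Pi_def\<close>)
  also have "\<dots> = b j" using finprod_singleton_swap[of j "{..<m}" b] j bc by (auto simp: Pi_def)
  finally have "zcoords G m b (b j) = (\<lambda>p. if p < m then (if p = j then 1 else 0) else 0)"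
    using zcoords_zcomb[OF B, of "\<lambda>p. if p = j then 1 else 0"] by simp
  then show "basis_matrix G m b f $$ (p, j) = 1\<^sub>m m $$ (p, j)"
    using p j f[OF j] by (simp add: basis_matrix_def)
qed (auto simp: basis_matrix_def)

lemma basis_matrix_pow:
  assumes B: "is_zbasis G m b" and f: "f \<in> hom G G"
  shows "basis_matrix G m b (f ^^ k) = basis_matrix G m b f ^\<^sub>m k"
proof (induction k)
  case 0
  have "basis_matrix G m b (f ^^ 0) = 1\<^sub>m m" by (rule basis_matrix_id[OF B]) simp
  moreover have "basis_matrix G m b f ^\<^sub>m 0 = 1\<^sub>m m" by (simp add: basis_matrix_def)
  ultimately show ?case by (simp only:)
next
  case (Suc k)
  have "f ^^ Suc k = (\<lambda>x. (f ^^ k) (f x))" by (simp only: funpow_Suc_right comp_def)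
  then have "basis_matrix G m b (f ^^ Suc k) = basis_matrix G m b (\<lambda>x. (f ^^ k) (f x))"
    by (simp only:)
  also have "\<dots> = basis_matrix G m b (f ^^ k) * basis_matrix G m b f"
    by (rule basis_matrix_comp[OF B f funpow_hom[OF f]])
  finally show ?case using Suc.IH by (metis pow_mat.simps(2))
qed

lemma basis_matrix_left_inverse:
  assumes B: "is_zbasis G m b" and f: "f \<in> hom G G" and g: "g \<in> hom G G"
    and gf: "\<And>x. x \<in> carrier G \<Longrightarrow> g (f x) = x"
  shows "basis_matrix G m b g * basis_matrix G m b f = 1\<^sub>m m"
proof -
  have "basis_matrix G m b (\<lambda>x. g (f x)) = 1\<^sub>m m"
    by (rule basis_matrix_id[OF B]) (use gf zbasis_closed[OF B] in auto)
  then show ?thesis using basis_matrix_comp[OF B f g] by simp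
qed

lemma zcomb_in_bounded_span:
  assumes bc: "b ` {..<m} \<subseteq> carrier G" and a: "\<And>p. p < m \<Longrightarrow> real_of_int \<bar>a p\<bar> \<le> R"
    and R: "R \<ge> 0"
  shows "zcomb G b a m \<in> bounded_span G (b ` {..<m}) (real m * R)"
proof -
  have X: "finite (b ` {..<m})" "b ` {..<m} \<subseteq> carrier G" using bc by auto
  have "finprod G (\<lambda>j. b j [^] a j) {..<m} \<in> bounded_span G (b ` {..<m}) (real (card {..<m}) * R)"
  proof (rule finprod_in_bounded_span[OF X(2) _ R])
    fix j assume j: "j \<in> {..<m}"
    have "b j [^] a j \<in> bounded_span G (b ` {..<m}) (real_of_int \<bar>a j\<bar>)"
      using int_pow_in_bounded_span[OF X] j by simp
    also have "\<dots> \<subseteq> bounded_span G (b ` {..<m}) R"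
      using a j R by (intro bounded_span_mono[OF X]) auto
    finally show "b j [^] a j \<in> bounded_span G (b ` {..<m}) R" .
  qed simp
  then show ?thesis by (simp add: zcomb_eq_finprod[OF bc])
qed

lemma zcoords_bounded_span:
  assumes B: "is_zbasis G m b" and X: "finite X" "X \<subseteq> carrier G"
    and y: "y \<in> bounded_span G X R" and R: "R \<ge> 0" and p: "p < m"
  shows "real_of_int \<bar>zcoords G m b y p\<bar> \<le> R * (\<Sum>x\<in>X. \<Sum>q<m. real_of_int \<bar>zcoords G m b x q\<bar>)"
proof -
  note bc = zbasis_closed[OF B]
  obtain a where a: "y = finprod G (\<lambda>x. x [^] a x) X" "\<forall>x\<in>X. real_of_int \<bar>a x\<bar> \<le> R"
    using y unfolding bounded_span_def by blast
  have "y = finprod G (\<lambda>x. zcomb G b (\<lambda>q. a x * zcoords G m b x q) m) X"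
    unfolding a(1)
  proof (rule finprod_cong'[OF refl])
    show "(\<lambda>x. zcomb G b (\<lambda>q. a x * zcoords G m b x q) m) \<in> X \<rightarrow> carrier G"
      using zcomb_closed[OF bc] by blast
    fix x assume "x \<in> X"
    then have "x [^] a x = zcomb G b (zcoords G m b x) m [^] a x"
      using X zcomb_zcoords[OF B] by auto
    also have "\<dots> = zcomb G b (\<lambda>q. a x * zcoords G m b x q) m"
      by (rule zcomb_scale[OF bc, symmetric])
    finally show "x [^] a x = zcomb G b (\<lambda>q. a x * zcoords G m b x q) m" .
  qed
  also have "\<dots> = zcomb G b (\<lambda>q. \<Sum>x\<in>X. a x * zcoords G m b x q) m"
    by (rule zcomb_sum[symmetric]) (simp_all add: bc X)
  finally have "zcoords G m b y p = (\<Sum>x\<in>X. a x * zcoords G m b x p)"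
    using zcoords_zcomb[OF B] p by simp
  then have "real_of_int \<bar>zcoords G m b y p\<bar> = \<bar>\<Sum>x\<in>X. real_of_int (a x) * real_of_int (zcoords G m b x p)\<bar>"
    by simp
  also have "\<dots> \<le> (\<Sum>x\<in>X. \<bar>real_of_int (a x) * real_of_int (zcoords G m b x p)\<bar>)" by (rule sum_abs)
  also have "\<dots> \<le> (\<Sum>x\<in>X. R * (\<Sum>q<m. real_of_int \<bar>zcoords G m b x q\<bar>))"
  proof (rule sum_mono)
    fix x assume x: "x \<in> X"
    have "real_of_int \<bar>zcoords G m b x p\<bar> \<le> (\<Sum>q<m. real_of_int \<bar>zcoords G m b x q\<bar>)"
      using member_le_sum[of p "{..<m}" "\<lambda>q. real_of_int \<bar>zcoords G m b x q\<bar>"] p by simp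
    then show "\<bar>real_of_int (a x) * real_of_int (zcoords G m b x p)\<bar> \<le> R * (\<Sum>q<m. real_of_int \<bar>zcoords G m b x q\<bar>)"
      unfolding abs_mult using a(2) x by (intro mult_mono) auto
  qed
  finally show ?thesis by (simp add: sum_distrib_left)
qed

end

section \<open>Polynomially bounded matrix powers and eigenvalues\<close>

definition poly_bounded :: "(nat \<Rightarrow> real) \<Rightarrow> bool" where
  "poly_bounded f \<longleftrightarrow> (\<exists>C d. \<forall>k. f k \<le> C * real (Suc k) ^ d)"

definition pow_poly_bounded :: "int mat \<Rightarrow> bool" where
  "pow_poly_bounded A \<longleftrightarrow>
     (\<forall>i<dim_row A. \<forall>j<dim_col A. poly_bounded (\<lambda>k. real_of_int \<bar>(A ^\<^sub>m k) $$ (i, j)\<bar>))"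

lemma poly_bounded_uniform:
  assumes "finite I" and "\<And>i. i \<in> I \<Longrightarrow> poly_bounded (f i)"
  shows "\<exists>C d. C \<ge> 0 \<and> (\<forall>i\<in>I. \<forall>k. f i k \<le> C * real (Suc k) ^ d)"
  using assms
proof (induction I rule: finite_induct)
  case empty
  then show ?case by auto
next
  case (insert i I)
  obtain C d where C: "C \<ge> 0" "\<forall>i'\<in>I. \<forall>k. f i' k \<le> C * real (Suc k) ^ d"
    using insert by auto
  obtain C' d' where C': "\<forall>k. f i k \<le> C' * real (Suc k) ^ d'"
    using insert.prems[of i] by (auto simp: poly_bounded_def)
  have "f i' k \<le> (C + \<bar>C'\<bar>) * real (Suc k) ^ (d + d')" if "i' \<in> insert i I" for i' k
  proof -
    have pow_le: "real (Suc k) ^ e \<le> real (Suc k) ^ (d + d')" if "e \<le> d + d'" for e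
      using that by (intro power_increasing) auto
    have le: "C * real (Suc k) ^ d \<le> (C + \<bar>C'\<bar>) * real (Suc k) ^ (d + d')"
      using C(1) pow_le[of d] by (intro mult_mono) auto
    have le': "C' * real (Suc k) ^ d' \<le> (C + \<bar>C'\<bar>) * real (Suc k) ^ (d + d')"
      using C(1) pow_le[of d'] by (intro mult_mono) auto
    show ?thesis
    proof (cases "i' = i")
      case True
      then show ?thesis using C' le' by (meson order_trans)
    next
      case False
      then show ?thesis using that C(2) le by (meson insertE order_trans)
    qed
  qed
  then show ?case using C(1) by (intro exI[of _ "C + \<bar>C'\<bar>"]) auto
qed

lemma basis_matrix_carrier: "basis_matrix G m b f \<in> carrier_mat m m"
  by (simp add: basis_matrix_def)

lemma pow_poly_bounded_uniform:
  assumes A: "A \<in> carrier_mat m m" and bounded: "pow_poly_bounded A"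
  shows "\<exists>C d. C \<ge> 0 \<and>
    (\<forall>k i j. i < m \<longrightarrow> j < m \<longrightarrow> real_of_int \<bar>(A ^\<^sub>m k) $$ (i, j)\<bar> \<le> C * real (Suc k) ^ d)"
proof -
  have dims: "dim_row A = m" "dim_col A = m" using A by auto
  have entry: "poly_bounded (\<lambda>k. real_of_int \<bar>(A ^\<^sub>m k) $$ ij\<bar>)" if "ij \<in> {..<m} \<times> {..<m}" for ij
    using bounded that unfolding pow_poly_bounded_def dims by blast
  obtain C d where "C \<ge> 0"
    and "\<forall>ij\<in>{..<m} \<times> {..<m}. \<forall>k. real_of_int \<bar>(A ^\<^sub>m k) $$ ij\<bar> \<le> C * real (Suc k) ^ d"
    using poly_bounded_uniform[of "{..<m} \<times> {..<m}" "\<lambda>ij k. real_of_int \<bar>(A ^\<^sub>m k) $$ ij\<bar>", OF _ entry]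
    by blast
  then show ?thesis by blast
qed

context comm_group
begin

lemma funpow_eq_zcomb_basis_matrix_pow:
  assumes B: "is_zbasis G m b" and \<theta>: "\<theta> \<in> hom G G" and x: "x \<in> carrier G"
  shows "(\<theta> ^^ k) x =
    zcomb G b (\<lambda>i. \<Sum>j<m. zcoords G m b x j * (basis_matrix G m b \<theta> ^\<^sub>m k) $$ (i, j)) m"
proof -
  have "(\<theta> ^^ k) x = zcomb G b (\<lambda>i. \<Sum>j<m. zcoords G m b x j * zcoords G m b ((\<theta> ^^ k) (b j)) i) m"
    by (subst zcomb_zcoords[OF B x, symmetric], rule hom_zcomb[OF B funpow_hom[OF \<theta>]])
  also have "\<dots> = zcomb G b (\<lambda>i. \<Sum>j<m. zcoords G m b x j * (basis_matrix G m b \<theta> ^\<^sub>m k) $$ (i, j)) m"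
    unfolding basis_matrix_pow[OF B \<theta>, symmetric] by (rule zcomb_cong) (simp add: basis_matrix_def)
  finally show ?thesis .
qed

lemma poly_orbit_if_pow_poly_bounded:
  assumes B: "is_zbasis G m b" and \<theta>: "\<theta> \<in> hom G G"
    and bounded: "pow_poly_bounded (basis_matrix G m b \<theta>)" and x: "x \<in> carrier G"
  shows "poly_orbit G \<theta> x"
proof -
  let ?A = "basis_matrix G m b \<theta>" and ?c = "zcoords G m b x"
  obtain C d where C: "C \<ge> 0"
    and bound: "\<forall>k i j. i < m \<longrightarrow> j < m \<longrightarrow> real_of_int \<bar>(?A ^\<^sub>m k) $$ (i, j)\<bar> \<le> C * real (Suc k) ^ d"
    using pow_poly_bounded_uniform[OF basis_matrix_carrier bounded] by blast
  define S where "S = (\<Sum>j<m. real_of_int \<bar>?c j\<bar>)"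
  have S: "S \<ge> 0" by (simp add: S_def sum_nonneg)
  have "(\<theta> ^^ k) x \<in> bounded_span G (b ` {..<m}) (real m * (S * (C * real (Suc k) ^ d)))" for k
    unfolding funpow_eq_zcomb_basis_matrix_pow[OF B \<theta> x]
  proof (rule zcomb_in_bounded_span[OF zbasis_closed[OF B]])
    fix i assume i: "i < m"
    have "real_of_int \<bar>\<Sum>j<m. ?c j * (?A ^\<^sub>m k) $$ (i, j)\<bar>
        = \<bar>\<Sum>j<m. real_of_int (?c j) * real_of_int ((?A ^\<^sub>m k) $$ (i, j))\<bar>"
      by simp
    also have "\<dots> \<le> (\<Sum>j<m. \<bar>real_of_int (?c j) * real_of_int ((?A ^\<^sub>m k) $$ (i, j))\<bar>)"
      by (rule sum_abs)
    also have "\<dots> = (\<Sum>j<m. real_of_int \<bar>?c j\<bar> * real_of_int \<bar>(?A ^\<^sub>m k) $$ (i, j)\<bar>)"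
      by (simp add: abs_mult)
    also have "\<dots> \<le> (\<Sum>j<m. real_of_int \<bar>?c j\<bar> * (C * real (Suc k) ^ d))"
      using bound i by (intro sum_mono mult_left_mono) simp_all
    finally show "real_of_int \<bar>\<Sum>j<m. ?c j * (?A ^\<^sub>m k) $$ (i, j)\<bar> \<le> S * (C * real (Suc k) ^ d)"
      by (simp add: S_def sum_distrib_right)
  qed (use S C in simp)
  then show ?thesis
    unfolding poly_orbit_def using S C zbasis_closed[OF B]
    by (intro exI[of _ "b ` {..<m}"] exI[of _ "real m * S * C"] exI[of _ d]) (simp add: mult.assoc)
qed

lemma pow_poly_bounded_if_poly_orbit:
  assumes B: "is_zbasis G m b" and \<theta>: "\<theta> \<in> hom G G"
    and orbits: "\<And>j. j < m \<Longrightarrow> poly_orbit G \<theta> (b j)"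
  shows "pow_poly_bounded (basis_matrix G m b \<theta>)"
  unfolding pow_poly_bounded_def
proof (intro allI impI)
  fix p j assume "p < dim_row (basis_matrix G m b \<theta>)" "j < dim_col (basis_matrix G m b \<theta>)"
  then have p: "p < m" and j: "j < m" by (auto simp: basis_matrix_def)
  obtain X C d where X: "finite X" "X \<subseteq> carrier G" "C \<ge> 0"
    and orb: "\<And>k. (\<theta> ^^ k) (b j) \<in> bounded_span G X (C * real (Suc k) ^ d)"
    using orbits[OF j] unfolding poly_orbit_def by blast
  define K where "K = (\<Sum>x\<in>X. \<Sum>q<m. real_of_int \<bar>zcoords G m b x q\<bar>)"
  have "real_of_int \<bar>(basis_matrix G m b \<theta> ^\<^sub>m k) $$ (p, j)\<bar> \<le> (C * K) * real (Suc k) ^ d" for k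
  proof -
    have "(basis_matrix G m b \<theta> ^\<^sub>m k) $$ (p, j) = zcoords G m b ((\<theta> ^^ k) (b j)) p"
      unfolding basis_matrix_pow[OF B \<theta>, symmetric] using p j by (simp add: basis_matrix_def)
    then show ?thesis
      using zcoords_bounded_span[OF B X(1,2) orb _ p] X(3) by (simp add: K_def mult_ac)
  qed
  then show "poly_bounded (\<lambda>k. real_of_int \<bar>(basis_matrix G m b \<theta> ^\<^sub>m k) $$ (p, j)\<bar>)"
    unfolding poly_bounded_def by blast
qed

end

lemma exp_beats_poly:
  assumes r: "(r::real) > 1" and a: "a > 0"
  shows "\<exists>k. K * real (Suc k) ^ d < a * r ^ k"
proof -
  have "((\<lambda>k::nat. real (Suc k) ^ d / r ^ k) \<longlongrightarrow> 0) sequentially"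
    using r by real_asymp
  moreover have "a / (\<bar>K\<bar> + 1) > 0" using a by simp
  ultimately have "eventually (\<lambda>k. real (Suc k) ^ d / r ^ k < a / (\<bar>K\<bar> + 1)) sequentially"
    by (rule order_tendstoD(2))
  then obtain k where k: "real (Suc k) ^ d / r ^ k < a / (\<bar>K\<bar> + 1)"
    by (auto simp: eventually_sequentially)
  have "r ^ k > 0" using r by simp
  then have "(\<bar>K\<bar> + 1) * real (Suc k) ^ d < a * r ^ k"
    using k by (simp add: field_simps)
  moreover have "K * real (Suc k) ^ d \<le> (\<bar>K\<bar> + 1) * real (Suc k) ^ d"
    by (intro mult_right_mono) auto
  ultimately show ?thesis by (intro exI[of _ k]) linarith
qed

lemma eigenvalue_norm_le_1_if_pow_poly_bounded:
  fixes A :: "int mat"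
  assumes A: "A \<in> carrier_mat m m" and bounded: "pow_poly_bounded A"
    and ev: "eigenvalue (map_mat (of_int :: int \<Rightarrow> complex) A) c"
  shows "cmod c \<le> 1"
proof (rule ccontr)
  assume c: "\<not> cmod c \<le> 1"
  let ?A = "map_mat (of_int :: int \<Rightarrow> complex) A"
  have Ac: "?A \<in> carrier_mat m m" using A by simp
  obtain v where v: "eigenvector ?A v c" using ev unfolding eigenvalue_def by blast
  have vc: "v \<in> carrier_vec m" and v0: "v \<noteq> 0\<^sub>v m" using v A by (auto simp: eigenvector_def)
  obtain p where p: "p < m" "v $ p \<noteq> 0"
    using v0 vc by (metis carrier_vecD eq_vecI index_zero_vec(1) index_zero_vec(2))
  obtain C d where
    bound: "\<forall>k i j. i < m \<longrightarrow> j < m \<longrightarrow> real_of_int \<bar>(A ^\<^sub>m k) $$ (i, j)\<bar> \<le> C * real (Suc k) ^ d"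
    using pow_poly_bounded_uniform[OF A bounded] by blast
  define V where "V = (\<Sum>j<m. cmod (v $ j))"
  have growth: "cmod c ^ k * cmod (v $ p) \<le> C * real (Suc k) ^ d * V" for k
  proof -
    have "c ^ k * v $ p = (?A ^\<^sub>m k *\<^sub>v v) $ p"
      using eigenvector_pow[OF Ac v, of k] p vc by simp
    also have "\<dots> = (\<Sum>j<m. of_int ((A ^\<^sub>m k) $$ (p, j)) * v $ j)"
      using p vc A by (simp add: of_int_hom.mat_hom_pow[OF A, symmetric] scalar_prod_def lessThan_atLeast0)
    finally have "cmod (c ^ k * v $ p) = cmod (\<Sum>j<m. of_int ((A ^\<^sub>m k) $$ (p, j)) * v $ j)"
      by simp
    then have "cmod c ^ k * cmod (v $ p) = cmod (\<Sum>j<m. of_int ((A ^\<^sub>m k) $$ (p, j)) * v $ j)"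
      by (simp add: norm_mult norm_power)
    also have "\<dots> \<le> (\<Sum>j<m. real_of_int \<bar>(A ^\<^sub>m k) $$ (p, j)\<bar> * cmod (v $ j))"
      by (rule order_trans[OF norm_sum]) (simp add: norm_mult)
    also have "\<dots> \<le> (\<Sum>j<m. C * real (Suc k) ^ d * cmod (v $ j))"
      using bound p by (intro sum_mono mult_right_mono) simp_all
    finally show ?thesis by (simp add: V_def sum_distrib_left)
  qed
  obtain k where "C * V * real (Suc k) ^ d < cmod (v $ p) * cmod c ^ k"
    using exp_beats_poly[of "cmod c" "cmod (v $ p)" "C * V" d] c p by auto
  with growth[of k] show False by (simp add: mult_ac)
qed

lemma pow_poly_bounded_if_eigenvalues_le_1:
  fixes A :: "int mat"
  assumes A: "A \<in> carrier_mat m m"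
    and ev: "\<And>c. eigenvalue (map_mat (of_int :: int \<Rightarrow> complex) A) c \<Longrightarrow> cmod c \<le> 1"
  shows "pow_poly_bounded A"
proof (cases "m = 0")
  case True
  then show ?thesis using A by (simp add: pow_poly_bounded_def)
next
  case False
  let ?A = "map_mat (of_int :: int \<Rightarrow> complex) A"
  have Ac: "?A \<in> carrier_mat m m" using A by simp
  have "spectral_radius ?A \<in> norm ` spectrum ?A" using spectral_radius_mem_max(1)[OF Ac] False by simp
  then have "spectral_radius ?A \<le> 1" using ev by (auto simp: spectrum_def)
  then obtain c1 c2 where norm_bound: "\<And>k. norm_bound (?A ^\<^sub>m k) (c1 + c2 * real k ^ (m - 1))"
    using spectral_radius_jnf_norm_bound_le_1_upper_triangular[OF Ac] by blast
  have "real_of_int \<bar>(A ^\<^sub>m k) $$ (p, j)\<bar> \<le> (\<bar>c1\<bar> + \<bar>c2\<bar>) * real (Suc k) ^ (m - 1)"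
    if p: "p < m" and j: "j < m" for k p j
  proof -
    have "real_of_int \<bar>(A ^\<^sub>m k) $$ (p, j)\<bar> = cmod ((?A ^\<^sub>m k) $$ (p, j))"
      using p j A by (simp add: of_int_hom.mat_hom_pow[OF A, symmetric])
    also have "\<dots> \<le> c1 + c2 * real k ^ (m - 1)"
      using norm_bound[of k] p j A unfolding norm_bound_def by simp
    also have "\<dots> \<le> (\<bar>c1\<bar> + \<bar>c2\<bar>) * real (Suc k) ^ (m - 1)"
    proof -
      have "c1 \<le> \<bar>c1\<bar> * real (Suc k) ^ (m - 1)"
        using mult_left_mono[of 1 "real (Suc k) ^ (m - 1)" "\<bar>c1\<bar>"] by simp
      moreover have "c2 * real k ^ (m - 1) \<le> \<bar>c2\<bar> * real k ^ (m - 1)"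
        by (rule mult_right_mono) auto
      moreover have "\<dots> \<le> \<bar>c2\<bar> * real (Suc k) ^ (m - 1)"
        by (intro mult_left_mono power_mono) auto
      ultimately show ?thesis by (simp add: distrib_right)
    qed
    finally show ?thesis .
  qed
  then show ?thesis
    using A unfolding pow_poly_bounded_def poly_bounded_def by (metis carrier_matD pow_mat_dim_square)
qed

lemma eigenvalue_left_inverse:
  fixes A B :: "'a :: field mat"
  assumes A: "A \<in> carrier_mat m m" and B: "B \<in> carrier_mat m m" and BA: "B * A = 1\<^sub>m m"
    and ev: "eigenvalue A c"
  shows "c \<noteq> 0 \<and> eigenvalue B (inverse c)"
proof -
  obtain v where v: "eigenvector A v c" using ev unfolding eigenvalue_def by blast
  have vc: "v \<in> carrier_vec m" and v0: "v \<noteq> 0\<^sub>v m" and Av: "A *\<^sub>v v = c \<cdot>\<^sub>v v"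
    using v A by (auto simp: eigenvector_def)
  have "v = B *\<^sub>v (A *\<^sub>v v)" using BA A B vc by (metis assoc_mult_mat_vec one_mult_mat_vec)
  also have "\<dots> = c \<cdot>\<^sub>v (B *\<^sub>v v)" using Av B vc by (simp add: mult_mat_vec)
  finally have v_eq: "v = c \<cdot>\<^sub>v (B *\<^sub>v v)" .
  have c0: "c \<noteq> 0"
  proof
    assume "c = 0"
    moreover have "0 \<cdot>\<^sub>v (B *\<^sub>v v) = 0\<^sub>v m" by (rule eq_vecI) (use B in auto)
    ultimately have "v = 0\<^sub>v m" using v_eq by simp
    then show False using v0 by simp
  qed
  have "B *\<^sub>v v = inverse c \<cdot>\<^sub>v v"
    using c0 by (subst (2) v_eq) (simp add: smult_smult_assoc)
  then have "eigenvector B v (inverse c)" using vc v0 B by (simp add: eigenvector_def)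
  then show ?thesis using c0 unfolding eigenvalue_def by blast
qed

lemma eigenvalue_of_int_left_inverse:
  fixes A B :: "int mat"
  assumes A: "A \<in> carrier_mat m m" and B: "B \<in> carrier_mat m m" and BA: "B * A = 1\<^sub>m m"
    and ev: "eigenvalue (map_mat (of_int :: int \<Rightarrow> complex) A) c"
  shows "c \<noteq> 0 \<and> eigenvalue (map_mat (of_int :: int \<Rightarrow> complex) B) (inverse c)"
proof (rule eigenvalue_left_inverse[OF _ _ _ ev])
  have "map_mat (of_int :: int \<Rightarrow> complex) B * map_mat of_int A = map_mat of_int (B * A)"
    by (rule of_int_hom.mat_hom_mult[OF B A, symmetric])
  then show "map_mat (of_int :: int \<Rightarrow> complex) B * map_mat of_int A = 1\<^sub>m m"
    using BA of_int_hom.mat_hom_one by simp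
qed (use A B in simp_all)

section \<open>Propagation along the lower central series\<close>

lemma (in group_hom) subgroup_vimage: "subgroup S H \<Longrightarrow> subgroup {x \<in> carrier G. h x \<in> S} G"
  by (rule G.subgroupI) (auto simp: subgroup.one_closed subgroup.m_closed subgroup.m_inv_closed)

lemma lcs_matrix_carrier: "lcs_matrix G \<phi> i m b \<in> carrier_mat m m"
  by (simp add: lcs_matrix_def basis_matrix_carrier)

context group
begin

lemma lcs_free_factor_poly_orbit_Suc:
  assumes \<phi>: "\<phi> \<in> iso G G"
    and orbits_i: "\<And>D. D \<in> carrier (lcs_free_factor G i) \<Longrightarrow> poly_orbit (lcs_free_factor G i) (induced_free_aut \<phi>) D"
    and orbits_0: "\<And>E. E \<in> carrier (lcs_free_factor G 0) \<Longrightarrow> poly_orbit (lcs_free_factor G 0) (induced_free_aut \<phi>) E"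
    and D: "D \<in> carrier (lcs_free_factor G (Suc i))"
  shows "poly_orbit (lcs_free_factor G (Suc i)) (induced_free_aut \<phi>) D"
proof -
  let ?F = "lcs_free_factor G (Suc i)" and ?\<theta> = "induced_free_aut \<phi>"
  let ?P = "{x \<in> carrier (subgroup_generated G (lcs G (Suc i))). lcs_proj G (Suc i) x \<in> {D \<in> carrier ?F. poly_orbit ?F ?\<theta> D}}"
  have "subgroup ?P (subgroup_generated G (lcs G (Suc i)))"
    by (intro group_hom.subgroup_vimage[OF lcs_proj_group_hom] comm_group.poly_orbit_subgroup
        comm_group_lcs_free_factor induced_free_aut_hom[OF \<phi>])
  then have P: "subgroup ?P G" using subgroup_subgroup_generated_iff by blast
  have "commutator G u v \<in> ?P" if u: "u \<in> lcs G i" and v: "v \<in> carrier G" for u v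
  proof -
    have Du: "lcs_proj G i u \<in> carrier (lcs_free_factor G i)" by (rule lcs_proj_closed[OF u])
    have Ev: "lcs_proj G 0 v \<in> carrier (lcs_free_factor G 0)" using lcs_proj_closed[of v 0] v by simp
    have "poly_orbit ?F ?\<theta> (lcs_pairing G i (lcs_proj G i u) (lcs_proj G 0 v))"
      by (rule poly_orbit_bilinear[of "lcs_free_factor G i" "lcs_free_factor G 0" ?F "lcs_pairing G i" ?\<theta> ?\<theta> ?\<theta>,
            OF comm_group_lcs_free_factor comm_group_lcs_free_factor comm_group_lcs_free_factor
            lcs_pairing_hom_left lcs_pairing_hom_right induced_free_aut_hom[OF \<phi>] induced_free_aut_hom[OF \<phi>]
            lcs_pairing_induced_free_aut[OF \<phi>] Du orbits_i[OF Du] Ev orbits_0[OF Ev]])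
    then show ?thesis
      using u v by (simp add: lcs_pairing_lcs_proj commutator_in_lcs_Suc lcs_proj_closed)
  qed
  then have "generate G {commutator G u v | u v. u \<in> lcs G i \<and> v \<in> carrier G} \<subseteq> ?P"
    by (intro generate_subgroup_incl[OF _ P]) blast
  then have "lcs G (Suc i) \<subseteq> ?P" by (simp add: lcs_Suc_commutators)
  moreover obtain x where "x \<in> lcs G (Suc i)" "D = lcs_proj G (Suc i) x"
    using D lcs_proj_surj by auto
  ultimately show ?thesis by blast
qed

lemma lcs_free_factor_poly_orbit:
  assumes \<phi>: "\<phi> \<in> iso G G"
    and orbits_0: "\<And>E. E \<in> carrier (lcs_free_factor G 0) \<Longrightarrow> poly_orbit (lcs_free_factor G 0) (induced_free_aut \<phi>) E"
  shows "D \<in> carrier (lcs_free_factor G i) \<Longrightarrow> poly_orbit (lcs_free_factor G i) (induced_free_aut \<phi>) D"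
proof (induction i arbitrary: D)
  case 0
  then show ?case by (rule orbits_0)
next
  case (Suc i)
  then show ?case by (intro lcs_free_factor_poly_orbit_Suc[OF \<phi> _ orbits_0])
qed

lemma lcs_matrix_eigenvalues_le_1:
  assumes \<phi>: "\<phi> \<in> iso G G"
    and B0: "is_zbasis (lcs_free_factor G 0) m0 b0"
    and ev0: "\<And>c. eigenvalue (map_mat (of_int :: int \<Rightarrow> complex) (lcs_matrix G \<phi> 0 m0 b0)) c \<Longrightarrow> cmod c \<le> 1"
    and B: "is_zbasis (lcs_free_factor G n) m b"
    and ev: "eigenvalue (map_mat (of_int :: int \<Rightarrow> complex) (lcs_matrix G \<phi> n m b)) c"
  shows "cmod c \<le> 1"
proof -
  have "pow_poly_bounded (lcs_matrix G \<phi> 0 m0 b0)"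
    by (rule pow_poly_bounded_if_eigenvalues_le_1[OF lcs_matrix_carrier ev0])
  then have "poly_orbit (lcs_free_factor G 0) (induced_free_aut \<phi>) E"
    if "E \<in> carrier (lcs_free_factor G 0)" for E
    using comm_group.poly_orbit_if_pow_poly_bounded[OF comm_group_lcs_free_factor B0
        induced_free_aut_hom[OF \<phi>] _ that]
    by (simp add: lcs_matrix_def)
  then have "poly_orbit (lcs_free_factor G n) (induced_free_aut \<phi>) (b j)" if "j < m" for j
    using lcs_free_factor_poly_orbit[OF \<phi>] comm_group.zbasis_closed[OF comm_group_lcs_free_factor B] that
    by blast
  then have "pow_poly_bounded (lcs_matrix G \<phi> n m b)"
    using comm_group.pow_poly_bounded_if_poly_orbit[OF comm_group_lcs_free_factor B induced_free_aut_hom[OF \<phi>]]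
    by (simp add: lcs_matrix_def)
  then show ?thesis
    by (rule eigenvalue_norm_le_1_if_pow_poly_bounded[OF lcs_matrix_carrier _ ev])
qed

lemma lcs_matrix_eigenvalue_inverse:
  assumes \<phi>: "\<phi> \<in> iso G G" and \<psi>: "\<psi> \<in> iso G G" and \<psi>\<phi>: "\<And>x. x \<in> carrier G \<Longrightarrow> \<psi> (\<phi> x) = x"
    and B: "is_zbasis (lcs_free_factor G i) m b"
    and ev: "eigenvalue (map_mat (of_int :: int \<Rightarrow> complex) (lcs_matrix G \<phi> i m b)) c"
  shows "c \<noteq> 0 \<and> eigenvalue (map_mat (of_int :: int \<Rightarrow> complex) (lcs_matrix G \<psi> i m b)) (inverse c)"
proof (rule eigenvalue_of_int_left_inverse[OF lcs_matrix_carrier lcs_matrix_carrier _ ev])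
  show "lcs_matrix G \<psi> i m b * lcs_matrix G \<phi> i m b = 1\<^sub>m m"
    unfolding lcs_matrix_def
    by (rule comm_group.basis_matrix_left_inverse[OF comm_group_lcs_free_factor B
          induced_free_aut_hom[OF \<phi>] induced_free_aut_hom[OF \<psi>]])
      (rule induced_free_aut_inverse[OF \<phi> \<psi> \<psi>\<phi>])
qed

end

theorem lemma7p1:
  fixes G :: "('a, 'b) monoid_scheme" and \<phi> :: "'a \<Rightarrow> 'a"
  assumes "group G" and "nilpotent_group G" and "finitely_generated G"
    and "\<phi> \<in> iso G G"
    and "is_zbasis (lcs_free_factor G 0) m1 b1"
    and "\<And>c. eigenvalue (map_mat (of_int :: int \<Rightarrow> complex) (lcs_matrix G \<phi> 0 m1 b1)) c
            \<Longrightarrow> cmod c = 1"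
    and "is_zbasis (lcs_free_factor G n) m b"
  shows "\<forall>c. eigenvalue (map_mat (of_int :: int \<Rightarrow> complex) (lcs_matrix G \<phi> n m b)) c
            \<longrightarrow> cmod c = 1"
proof (intro allI impI)
  interpret group G by (rule assms(1))
  note \<phi> = assms(4) and B0 = assms(5) and ev0 = assms(6) and B = assms(7)
  define \<psi> where "\<psi> = inv_into (carrier G) \<phi>"
  have \<psi>: "\<psi> \<in> iso G G" unfolding \<psi>_def by (rule iso_set_sym[OF \<phi>])
  have \<psi>\<phi>: "\<psi> (\<phi> x) = x" and \<phi>\<psi>: "\<phi> (\<psi> x) = x" if "x \<in> carrier G" for x
    using \<phi> that by (auto simp: \<psi>_def iso_def bij_betw_def f_inv_into_f)
  have ev0_\<psi>: "cmod c \<le> 1" if "eigenvalue (map_mat of_int (lcs_matrix G \<psi> 0 m1 b1)) c" for c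
  proof -
    have "cmod (inverse c) = 1"
      using lcs_matrix_eigenvalue_inverse[OF \<psi> \<phi> \<phi>\<psi> B0 that] ev0 by blast
    then show ?thesis by (simp add: norm_inverse)
  qed
  fix c assume ev: "eigenvalue (map_mat (of_int :: int \<Rightarrow> complex) (lcs_matrix G \<phi> n m b)) c"
  have "cmod c \<le> 1"
    using lcs_matrix_eigenvalues_le_1[OF \<phi> B0 _ B ev] ev0 by simp
  moreover obtain "c \<noteq> 0" and "eigenvalue (map_mat of_int (lcs_matrix G \<psi> n m b)) (inverse c)"
    using lcs_matrix_eigenvalue_inverse[OF \<phi> \<psi> \<psi>\<phi> B ev] by blast
  then have "cmod (inverse c) \<le> 1" and "c \<noteq> 0"
    using lcs_matrix_eigenvalues_le_1[OF \<psi> B0 ev0_\<psi> B] by auto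
  then have "1 \<le> cmod c" by (simp add: norm_inverse inverse_le_1_iff)
  ultimately show "cmod c = 1" by simp
qed

end
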